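(* Let $G$ be a simple undirected graph, $X\subseteq V(G)$, $\mathbb{H}$ an $X$-net of $G$, and $C$ a $V_1V_2$-chunk of $\mathbb{H}$. Then applying merge$(C)$ to $\mathbb{H}$ yields an $X$-net of $G$.
   Context: For $U,V\subseteq V(G)$, a $UV$-path is a single vertex of $U\cap V$ or a path with one end in $U$ and the other in $V$; a $UV$-rung is a vertex-minimal induced $UV$-path. For a multigraph $\mathbb{H}$, $\nabla(\mathbb{H})$ adds an edge between each pair of leaves of $\mathbb{H}$. An $X$-net is a finite loopless multigraph $\mathbb{H}$ whose nodes and arcs are subsets of $X$ such that: (N1) $\mathbb{H}$ is connected and $\nabla(\mathbb{H})$ biconnected; (N2) the arcs are nonempty, pairwise disjoint, and partition $X$; (N3) $\mathbb{H}$ has exactly three leaf nodes, each a single leaf (degree-one) vertex of $G$; (N4) for each arc $E$ with end-nodes $U,V$, every vertex of $E$ lies on a $UV$-rung of $G[E]$; (N5) for arc $E$ and node $V$, $E\cap V\ne\emptyset$ iff $V$ is an end-node of $E$; (N6) for $u,v\in X$ in distinct arcs $E,F$, $uv\in E(G)$ iff $E,F$ have a common end-node $V$ with $\{u,v\}\subseteq V$. A split component of $\mathbb{H}$ is either an arc with end-nodes $U,V$ (split pair $\{U,V\}$), or, for nodes $\{U,V\}$ forming a cutset of $\nabla(\mathbb{H})$, a subgraph of $\mathbb{H}$ containing $U,V$ that is a maximal subgraph of $\nabla(\mathbb{H})$ in which $U,V$ are nonadjacent and do not form a cutset (split pair $\{U,V\}$). A $V_1V_2$-chunk is a union of the arcs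 of one or more split components all having split pair $\{V_1,V_2\}$. merge$(C)$ replaces all arcs of $\mathbb{H}$ intersecting $C$ by one arc with end-nodes $V_1,V_2$ equal to $C$ and deletes nodes all of whose incident arcs were deleted. *)

theory Defs
  imports Main
begin

definition simple_graph :: "'a set \<Rightarrow> ('a \<Rightarrow> 'a \<Rightarrow> bool) \<Rightarrow> bool" where
  "simple_graph Vg Eg \<longleftrightarrow> finite Vg \<and>
     (\<forall>u v. Eg u v \<longrightarrow> u \<in> Vg \<and> v \<in> Vg \<and> u \<noteq> v \<and> Eg v u)"

definition g_leaf :: "('a \<Rightarrow> 'a \<Rightarrow> bool) \<Rightarrow> 'a \<Rightarrow> bool" where
  "g_leaf Eg v \<longleftrightarrow> card {u. Eg v u} = 1"

definition is_path :: "('a \<Rightarrow> 'a \<Rightarrow> bool) \<Rightarrow> 'a list \<Rightarrow> bool" where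
  "is_path Eg P \<longleftrightarrow> P \<noteq> [] \<and> distinct P \<and>
     (\<forall>i. Suc i < length P \<longrightarrow> Eg (P ! i) (P ! Suc i))"

definition is_induced_path :: "('a \<Rightarrow> 'a \<Rightarrow> bool) \<Rightarrow> 'a list \<Rightarrow> bool" where
  "is_induced_path Eg P \<longleftrightarrow> is_path Eg P \<and>
     (\<forall>i j. i < length P \<and> j < length P \<and> Eg (P ! i) (P ! j) \<longrightarrow> j = Suc i \<or> i = Suc j)"

text \<open>A UV-path in the induced subgraph G[S] (a one-vertex list is a vertex of U \<inter> V).\<close>
definition uv_path :: "('a \<Rightarrow> 'a \<Rightarrow> bool) \<Rightarrow> 'a set \<Rightarrow> 'a set \<Rightarrow> 'a set \<Rightarrow> 'a list \<Rightarrow> bool" where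
  "uv_path Eg S U V P \<longleftrightarrow> is_path Eg P \<and> set P \<subseteq> S \<and> hd P \<in> U \<and> last P \<in> V"

definition uv_rung :: "('a \<Rightarrow> 'a \<Rightarrow> bool) \<Rightarrow> 'a set \<Rightarrow> 'a set \<Rightarrow> 'a set \<Rightarrow> 'a list \<Rightarrow> bool" where
  "uv_rung Eg S U V P \<longleftrightarrow> uv_path Eg S U V P \<and> is_induced_path Eg P \<and>
     \<not> (\<exists>Q. uv_path Eg S U V Q \<and> is_induced_path Eg Q \<and> set Q \<subset> set P)"

record 'a mgraph =
  nodes :: "'a set set"
  arcs :: "'a set set"
  ends :: "'a set \<Rightarrow> 'a set set"

definition madj :: "'n set \<Rightarrow> 'e set \<Rightarrow> ('e \<Rightarrow> 'n set) \<Rightarrow> 'n \<Rightarrow> 'n \<Rightarrow> bool" where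
  "madj N Ed f a b \<longleftrightarrow> a \<in> N \<and> b \<in> N \<and> a \<noteq> b \<and> (\<exists>e\<in>Ed. f e = {a, b})"

definition mconnected :: "'n set \<Rightarrow> 'e set \<Rightarrow> ('e \<Rightarrow> 'n set) \<Rightarrow> bool" where
  "mconnected N Ed f \<longleftrightarrow> (\<forall>a\<in>N. \<forall>b\<in>N. (madj N Ed f)\<^sup>*\<^sup>* a b)"

definition mbiconnected :: "'n set \<Rightarrow> 'e set \<Rightarrow> ('e \<Rightarrow> 'n set) \<Rightarrow> bool" where
  "mbiconnected N Ed f \<longleftrightarrow> mconnected N Ed f \<and> (\<forall>v\<in>N. mconnected (N - {v}) Ed f)"

definition mdegree :: "'a mgraph \<Rightarrow> 'a set \<Rightarrow> nat" where
  "mdegree H V = card {E \<in> arcs H. V \<in> ends H E}"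

definition leaf_nodes :: "'a mgraph \<Rightarrow> 'a set set" where
  "leaf_nodes H = {V \<in> nodes H. mdegree H V = 1}"

text \<open>Edges of nabla(H): the arcs of H plus one new edge per pair of distinct leaves.\<close>
datatype 'a nabla_edge = ArcE "'a set" | LeafE "'a set set"

definition nabla_edges :: "'a mgraph \<Rightarrow> 'a nabla_edge set" where
  "nabla_edges H = ArcE ` arcs H \<union>
     {LeafE {L1, L2} | L1 L2. L1 \<in> leaf_nodes H \<and> L2 \<in> leaf_nodes H \<and> L1 \<noteq> L2}"

fun nabla_ends :: "'a mgraph \<Rightarrow> 'a nabla_edge \<Rightarrow> 'a set set" where
  "nabla_ends H (ArcE E) = ends H E"
| "nabla_ends H (LeafE p) = p"

definition is_net :: "('a \<Rightarrow> 'a \<Rightarrow> bool) \<Rightarrow> 'a set \<Rightarrow> 'a mgraph \<Rightarrow> bool" where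
  "is_net Eg X H \<longleftrightarrow>
     \<comment> \<open>finite loopless multigraph whose nodes and arcs are subsets of X\<close>
     finite (nodes H) \<and> finite (arcs H) \<and>
     (\<forall>V\<in>nodes H. V \<subseteq> X) \<and> (\<forall>E\<in>arcs H. E \<subseteq> X) \<and>
     (\<forall>E\<in>arcs H. ends H E \<subseteq> nodes H \<and> card (ends H E) = 2) \<and>
     \<comment> \<open>(N1)\<close>
     mconnected (nodes H) (arcs H) (ends H) \<and>
     mbiconnected (nodes H) (nabla_edges H) (nabla_ends H) \<and>
     \<comment> \<open>(N2)\<close>
     (\<forall>E\<in>arcs H. E \<noteq> {}) \<and>
     (\<forall>E\<in>arcs H. \<forall>F\<in>arcs H. E \<noteq> F \<longrightarrow> E \<inter> F = {}) \<and>
     \<Union>(arcs H) = X \<and>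
     \<comment> \<open>(N3)\<close>
     card (leaf_nodes H) = 3 \<and>
     (\<forall>L\<in>leaf_nodes H. \<exists>v. L = {v} \<and> g_leaf Eg v) \<and>
     \<comment> \<open>(N4)\<close>
     (\<forall>E\<in>arcs H. \<forall>U V. ends H E = {U, V} \<longrightarrow>
        (\<forall>x\<in>E. \<exists>P. uv_rung Eg E U V P \<and> x \<in> set P)) \<and>
     \<comment> \<open>(N5)\<close>
     (\<forall>E\<in>arcs H. \<forall>V\<in>nodes H. E \<inter> V \<noteq> {} \<longleftrightarrow> V \<in> ends H E) \<and>
     \<comment> \<open>(N6)\<close>
     (\<forall>E\<in>arcs H. \<forall>F\<in>arcs H. \<forall>u v. E \<noteq> F \<and> u \<in> E \<and> v \<in> F \<longrightarrow>
        (Eg u v \<longleftrightarrow> (\<exists>V \<in> ends H E \<inter> ends H F. u \<in> V \<and> v \<in> V)))"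

definition nabla_subgraph :: "'a mgraph \<Rightarrow> 'a set set \<Rightarrow> 'a nabla_edge set \<Rightarrow> bool" where
  "nabla_subgraph H N' Ed' \<longleftrightarrow> N' \<subseteq> nodes H \<and> Ed' \<subseteq> nabla_edges H \<and>
     (\<forall>e\<in>Ed'. nabla_ends H e \<subseteq> N')"

text \<open>U, V belong to the subgraph, are nonadjacent in it, and do not form a cutset of it.\<close>
definition sc_prop :: "'a mgraph \<Rightarrow> 'a set \<Rightarrow> 'a set \<Rightarrow> 'a set set \<Rightarrow> 'a nabla_edge set \<Rightarrow> bool" where
  "sc_prop H U V N' Ed' \<longleftrightarrow> U \<in> N' \<and> V \<in> N' \<and>
     \<not> (\<exists>e\<in>Ed'. nabla_ends H e = {U, V}) \<and>
     mconnected (N' - {U, V}) Ed' (nabla_ends H)"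

definition is_cutpair :: "'a mgraph \<Rightarrow> 'a set \<Rightarrow> 'a set \<Rightarrow> bool" where
  "is_cutpair H U V \<longleftrightarrow> U \<in> nodes H \<and> V \<in> nodes H \<and> U \<noteq> V \<and>
     \<not> mconnected (nodes H - {U, V}) (nabla_edges H) (nabla_ends H)"

definition split_component :: "'a mgraph \<Rightarrow> 'a set set \<Rightarrow> 'a set set \<Rightarrow> bool" where
  "split_component H A P \<longleftrightarrow>
     (\<exists>E\<in>arcs H. A = {E} \<and> P = ends H E) \<or>
     (\<exists>U V N' Ed'. P = {U, V} \<and> is_cutpair H U V \<and>
        nabla_subgraph H N' Ed' \<and> Ed' \<subseteq> ArcE ` arcs H \<and> sc_prop H U V N' Ed' \<and>
        (\<forall>N'' Ed''. nabla_subgraph H N'' Ed'' \<and> sc_prop H U V N'' Ed'' \<and>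
            N' \<subseteq> N'' \<and> Ed' \<subseteq> Ed'' \<longrightarrow> N'' = N' \<and> Ed'' = Ed') \<and>
        A = {E. ArcE E \<in> Ed'})"

definition is_chunk :: "'a mgraph \<Rightarrow> 'a set \<Rightarrow> 'a set \<Rightarrow> 'a set \<Rightarrow> bool" where
  "is_chunk H V1 V2 C \<longleftrightarrow>
     (\<exists>S. S \<noteq> {} \<and> (\<forall>A\<in>S. split_component H A {V1, V2}) \<and> C = \<Union>(\<Union>S))"

definition merge :: "'a mgraph \<Rightarrow> 'a set \<Rightarrow> 'a set \<Rightarrow> 'a set \<Rightarrow> 'a mgraph" where
  "merge H V1 V2 C =
     \<lparr> nodes = {V \<in> nodes H. V = V1 \<or> V = V2 \<or> (\<exists>E\<in>arcs H. E \<inter> C = {} \<and> V \<in> ends H E)},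
       arcs = {E \<in> arcs H. E \<inter> C = {}} \<union> {C},
       ends = (\<lambda>E. if E = C then {V1, V2} else ends H E) \<rparr>"

end

theory Submission
  imports Defs
begin

text \<open>
  Sending every deleted node to \<open>V1\<close> (or to \<open>V2\<close>, when
  \<open>V1\<close> is the removed node) maps walks of \<open>H\<close> and of \<open>\<nabla>(H)\<close> minus a node to walks of the merge,
  so connectivity and biconnectivity survive. Nodes outside the split pair keep their arcs, and
  \<open>V1\<close> loses all its arcs outside the chunk only if it was a leaf already, for otherwise \<open>V2\<close>
  would separate \<open>V1\<close> from a leaf in \<open>\<nabla>(H)\<close>; so the leaves do not change.

  The substance is (N4) for the new arc \<open>C\<close>. In a split component, biconnectivity of \<open>\<nabla>(H)\<close>
  and maximality give every inner node a fan: two paths to \<open>V1\<close> and \<open>V2\<close> meeting only there,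
  built along the connected inner part by a Menger-type rerouting. Hence every arc of the chunk
  lies on a path of chunk arcs from \<open>V1\<close> to \<open>V2\<close>, and concatenating rungs of the arcs along it
  gives, by (N6), an induced path meeting \<open>V1\<close> and \<open>V2\<close> only at its ends: a rung of \<open>G[C]\<close>
  through any prescribed vertex of \<open>C\<close>.
\<close>

section \<open>Paths\<close>

lemma is_path_iff_successively: "is_path R P \<longleftrightarrow> P \<noteq> [] \<and> distinct P \<and> successively R P"
  by (auto simp: is_path_def successively_conv_nth)

lemma is_path_Cons_iff:
  "is_path R (a # P) \<longleftrightarrow> (P = [] \<or> is_path R P \<and> R a (hd P)) \<and> a \<notin> set P"
  unfolding is_path_iff_successively by (auto simp: successively_Cons)

lemma is_path_rev:
  assumes "is_path R P" "\<And>x y. R x y \<Longrightarrow> R y x"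
  shows "is_path R (rev P)"
  using assms unfolding is_path_iff_successively by (auto elim: successively_mono)

lemma is_path_append:
  assumes "is_path R P" "is_path R Q" "set P \<inter> set Q = {}" "R (last P) (hd Q)"
  shows "is_path R (P @ Q)"
  using assms unfolding is_path_iff_successively by (auto simp: successively_append_iff)

lemma is_path_appendD1: "is_path R (P @ Q) \<Longrightarrow> P \<noteq> [] \<Longrightarrow> is_path R P"
  unfolding is_path_iff_successively by (auto simp: successively_append_iff)

lemma is_path_appendD2: "is_path R (P @ Q) \<Longrightarrow> Q \<noteq> [] \<Longrightarrow> is_path R Q"
  unfolding is_path_iff_successively by (auto simp: successively_append_iff)

lemma is_path_mono:
  assumes "is_path R P" "\<And>x y. x \<in> set P \<Longrightarrow> y \<in> set P \<Longrightarrow> R x y \<Longrightarrow> S x y"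
  shows "is_path S P"
  using assms unfolding is_path_iff_successively by (auto intro: successively_mono)

lemma is_path_glue:
  assumes "is_path R Q" "is_path R P" "last Q = hd P" "set Q \<inter> set P = {hd P}"
  shows "is_path R (Q @ tl P)"
proof (cases "tl P = []")
  case True
  then show ?thesis using assms(1) by simp
next
  case False
  obtain p ps where P: "P = p # ps" using assms(2) by (cases P) (auto simp: is_path_def)
  have "is_path R ps" "R p (hd ps)" "p \<notin> set ps"
    using assms(2) False by (simp_all add: P is_path_Cons_iff)
  then show ?thesis
    using assms False P by (intro is_path_append) (auto simp: is_path_def)
qed

lemma set_butlast_last: "xs \<noteq> [] \<Longrightarrow> set xs = insert (last xs) (set (butlast xs))"
  by (metis append_butlast_last_id list.simps(15) rotate1.simps(2) set_rotate1)

lemma path_pair_reroute: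
  assumes "is_path R P1" "is_path R P2" "hd P1 = w" "hd P2 = w" "set P1 \<inter> set P2 = {w}"
    "u \<in> set P1" "u \<noteq> w" "R u w"
  obtains P1' where "is_path R P1'" "hd P1' = u" "last P1' = last P1" "set P1' \<subseteq> set P1"
    "is_path R (u # P2)" "set P1' \<inter> set (u # P2) = {u}"
proof -
  obtain ys zs where P1: "P1 = ys @ u # zs" using split_list[OF assms(6)] by blast
  have "ys \<noteq> []" using P1 assms(3,7) by auto
  then have "w \<in> set ys" using P1 assms(3) by (cases ys) auto
  then have w: "w \<notin> set (u # zs)" using assms(1) P1 by (auto simp: is_path_def)
  have "u \<notin> set P2" using assms(5-7) by blast
  moreover have "P2 \<noteq> []" using assms(2) by (simp add: is_path_def)
  ultimately have "is_path R (u # P2)" using assms(2,4,8) by (simp add: is_path_Cons_iff)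
  moreover have "is_path R (u # zs)" using assms(1) P1 is_path_appendD2 by blast
  moreover have "last (u # zs) = last P1" "set (u # zs) \<subseteq> set P1" using P1 by auto
  moreover have "set (u # zs) \<inter> set (u # P2) = {u}"
    using \<open>set (u # zs) \<subseteq> set P1\<close> assms(5) w by auto
  ultimately show ?thesis using that[of "u # zs"] by simp
qed

lemma path_join_first_hit:
  assumes Q: "is_path R Q" and P: "is_path R P" and hit: "last Q \<in> set P" "last Q \<noteq> hd P"
    and avoid: "set (butlast Q) \<inter> set P = {}"
  obtains zs where "is_path R (Q @ zs)" "last (Q @ zs) = last P" "set zs \<subseteq> set P - {hd P}"
proof -
  have Qne: "Q \<noteq> []" using Q by (simp add: is_path_def)
  obtain ys zs where P_split: "P = ys @ last Q # zs" using hit(1) split_list by metis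
  have "ys \<noteq> []" using P_split hit(2) by auto
  then have "hd P \<in> set ys" using P_split by (cases ys) auto
  then have hd_zs: "hd P \<notin> set (last Q # zs)" using P P_split by (auto simp: is_path_def)
  have "set Q \<inter> set (last Q # zs) = {last Q}"
  proof (intro equalityI subsetI)
    fix y assume y: "y \<in> set Q \<inter> set (last Q # zs)"
    show "y \<in> {last Q}" using y avoid P_split set_butlast_last[OF Qne] by auto
  qed (use Qne in simp)
  then have "is_path R (Q @ tl (last Q # zs))"
    using is_path_glue[OF Q is_path_appendD2[of R ys "last Q # zs"]] P P_split by simp
  moreover have "last (Q @ zs) = last P" using P_split Qne by (cases zs) auto
  moreover have "set zs \<subseteq> set P - {hd P}" using P_split hd_zs by auto
  ultimately show ?thesis using that by simp
qed

section \<open>Induced paths and rungs\<close>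

lemma is_induced_pathD:
  "is_induced_path Eg P \<Longrightarrow> i < length P \<Longrightarrow> j < length P \<Longrightarrow> Eg (P ! i) (P ! j) \<Longrightarrow>
     j = Suc i \<or> i = Suc j"
  by (simp add: is_induced_path_def)

lemma is_induced_path_is_path: "is_induced_path Eg P \<Longrightarrow> is_path Eg P"
  by (simp add: is_induced_path_def)

lemma is_induced_pathI:
  "is_path Eg P \<Longrightarrow> (\<And>i j. i < length P \<Longrightarrow> j < length P \<Longrightarrow> Eg (P ! i) (P ! j) \<Longrightarrow>
     j = Suc i \<or> i = Suc j) \<Longrightarrow> is_induced_path Eg P"
  by (simp add: is_induced_path_def)

lemma is_induced_path_take:
  assumes "is_induced_path Eg P" "0 < k"
  shows "is_induced_path Eg (take k P)"
proof (rule is_induced_pathI)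
  have "is_path Eg (take k P @ drop k P)" "P \<noteq> []"
    using is_induced_path_is_path[OF assms(1)] by (auto simp: is_path_def)
  then show "is_path Eg (take k P)" using assms(2) is_path_appendD1 by fastforce
qed (use is_induced_pathD[OF assms(1)] in simp)

lemma is_induced_path_drop:
  assumes "is_induced_path Eg P" "k < length P"
  shows "is_induced_path Eg (drop k P)"
proof (rule is_induced_pathI)
  have "is_path Eg (take k P @ drop k P)" using is_induced_path_is_path[OF assms(1)] by simp
  then show "is_path Eg (drop k P)" using assms(2) is_path_appendD2 by fastforce
next
  fix i j assume "i < length (drop k P)" "j < length (drop k P)" "Eg (drop k P ! i) (drop k P ! j)"
  then have "k + j = Suc (k + i) \<or> k + i = Suc (k + j)"
    using is_induced_pathD[OF assms(1), of "k + i" "k + j"] by simp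
  then show "j = Suc i \<or> i = Suc j" by auto
qed

lemma is_induced_path_rev:
  assumes "is_induced_path Eg P" "\<And>x y. Eg x y \<Longrightarrow> Eg y x"
  shows "is_induced_path Eg (rev P)"
proof (rule is_induced_pathI)
  show "is_path Eg (rev P)" using assms is_path_rev is_induced_path_is_path by blast
next
  fix i j assume ij: "i < length (rev P)" "j < length (rev P)" "Eg (rev P ! i) (rev P ! j)"
  then have "length P - Suc j = Suc (length P - Suc i) \<or> length P - Suc i = Suc (length P - Suc j)"
    using is_induced_pathD[OF assms(1)] by (simp add: rev_nth)
  then show "j = Suc i \<or> i = Suc j" using ij by auto
qed

lemma is_induced_path_append:
  assumes P: "is_induced_path Eg P" and R: "is_induced_path Eg R"
    and disj: "set P \<inter> set R = {}" and link: "Eg (last P) (hd R)"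
    and cross: "\<And>u v. u \<in> set P \<Longrightarrow> v \<in> set R \<Longrightarrow> Eg u v \<or> Eg v u \<Longrightarrow> u = last P \<and> v = hd R"
  shows "is_induced_path Eg (P @ R)"
proof (rule is_induced_pathI)
  show "is_path Eg (P @ R)" using P R disj link is_induced_path_is_path is_path_append by blast
  have Pne: "P \<noteq> []" and Rne: "R \<noteq> []" and dP: "distinct P" and dR: "distinct R"
    using is_induced_path_is_path[OF P] is_induced_path_is_path[OF R] by (auto simp: is_path_def)
  have crossing: "k = length P - 1 \<and> l = length P"
    if "k < length P" "length P \<le> l" "l < length P + length R"
      "Eg (P ! k) (R ! (l - length P)) \<or> Eg (R ! (l - length P)) (P ! k)" for k l
  proof -
    have "P ! k = P ! (length P - 1)" "R ! (l - length P) = R ! 0"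
      using cross[of "P ! k" "R ! (l - length P)"] that Pne Rne by (auto simp: last_conv_nth hd_conv_nth)
    then show ?thesis using that Pne Rne dP dR by (simp add: nth_eq_iff_index_eq)
  qed
  fix i j assume ij: "i < length (P @ R)" "j < length (P @ R)" "Eg ((P @ R) ! i) ((P @ R) ! j)"
  consider "i < length P" "j < length P" | "i < length P" "length P \<le> j"
    | "length P \<le> i" "j < length P" | "length P \<le> i" "length P \<le> j" by linarith
  then show "j = Suc i \<or> i = Suc j"
  proof cases
    case 1
    then have "Eg (P ! i) (P ! j)" using ij(3) by (simp add: nth_append)
    then show ?thesis using 1 is_induced_pathD[OF P] by blast
  next
    case 2
    then have "Eg (P ! i) (R ! (j - length P))" using ij(3) by (simp add: nth_append)
    then show ?thesis using 2 ij(2) crossing[of i j] by simp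
  next
    case 3
    then have "Eg (R ! (i - length P)) (P ! j)" using ij(3) by (simp add: nth_append)
    then show ?thesis using 3 ij(1) crossing[of j i] by simp
  next
    case 4
    then have "Eg (R ! (i - length P)) (R ! (j - length P))" using ij(3) by (simp add: nth_append)
    then have "j - length P = Suc (i - length P) \<or> i - length P = Suc (j - length P)"
      using 4 ij(1,2) is_induced_pathD[OF R] by simp
    then show ?thesis using 4 by auto
  qed
qed

lemma uv_rung_last_unique:
  assumes rung: "uv_rung Eg S U V P" and y: "y \<in> set P" "y \<in> V"
  shows "y = last P"
proof (rule ccontr)
  assume ne: "y \<noteq> last P"
  have ind: "is_induced_path Eg P" and up: "uv_path Eg S U V P"
    using rung by (auto simp: uv_rung_def)
  have Pne: "P \<noteq> []" and dP: "distinct P"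
    using is_induced_path_is_path[OF ind] by (auto simp: is_path_def)
  obtain p where p: "p < length P" "P ! p = y" using y(1) by (auto simp: in_set_conv_nth)
  have pl: "Suc p < length P" using p ne Pne by (metis Suc_lessI last_conv_nth diff_Suc_1)
  define Q where "Q = take (Suc p) P"
  have "last P \<notin> set Q"
  proof
    assume "last P \<in> set Q"
    then obtain i where "i < Suc p" "P ! i = P ! (length P - 1)"
      using Pne by (auto simp: Q_def in_set_conv_nth last_conv_nth)
    then show False using pl dP by (simp add: nth_eq_iff_index_eq)
  qed
  then have "set Q \<subset> set P" using Pne set_take_subset[of "Suc p" P] by (auto simp: Q_def)
  moreover have "is_induced_path Eg Q" using is_induced_path_take[OF ind] by (simp add: Q_def)
  moreover have "uv_path Eg S U V Q"
  proof -
    have "hd Q = hd P" using Pne by (simp add: Q_def)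
    moreover have "last Q = y" using p by (simp add: Q_def take_Suc_conv_app_nth)
    moreover have "set Q \<subseteq> S" using up set_take_subset[of "Suc p" P] by (auto simp: Q_def uv_path_def)
    ultimately show ?thesis using up is_induced_path_is_path[OF \<open>is_induced_path Eg Q\<close>] y(2)
      by (simp add: uv_path_def)
  qed
  ultimately show False using rung by (auto simp: uv_rung_def)
qed

lemma uv_rung_hd_unique:
  assumes rung: "uv_rung Eg S U V P" and y: "y \<in> set P" "y \<in> U"
  shows "y = hd P"
proof (rule ccontr)
  assume ne: "y \<noteq> hd P"
  have ind: "is_induced_path Eg P" and up: "uv_path Eg S U V P"
    using rung by (auto simp: uv_rung_def)
  have Pne: "P \<noteq> []" and dP: "distinct P"
    using is_induced_path_is_path[OF ind] by (auto simp: is_path_def)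
  obtain p where p: "p < length P" "P ! p = y" using y(1) by (auto simp: in_set_conv_nth)
  have p0: "0 < p" using p ne Pne by (cases p) (auto simp: hd_conv_nth)
  define Q where "Q = drop p P"
  have "hd P \<notin> set Q"
  proof
    assume "hd P \<in> set Q"
    then obtain i where "i < length P - p" "P ! (p + i) = P ! 0"
      using Pne by (auto simp: Q_def in_set_conv_nth hd_conv_nth)
    then show False using p0 dP Pne nth_eq_iff_index_eq[OF dP, of "p + i" 0] by simp
  qed
  then have "set Q \<subset> set P" using Pne set_drop_subset[of p P] by (auto simp: Q_def)
  moreover have "is_induced_path Eg Q" using is_induced_path_drop[OF ind p(1)] by (simp add: Q_def)
  moreover have "uv_path Eg S U V Q"
  proof -
    have "hd Q = y" using p by (simp add: Q_def hd_drop_conv_nth)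
    moreover have "last Q = last P" using p by (simp add: Q_def)
    moreover have "set Q \<subseteq> S" using up set_drop_subset[of p P] by (auto simp: Q_def uv_path_def)
    ultimately show ?thesis using up is_induced_path_is_path[OF \<open>is_induced_path Eg Q\<close>] y(2)
      by (simp add: uv_path_def)
  qed
  ultimately show False using rung by (auto simp: uv_rung_def)
qed

lemma nat_fun_bounded_steps_hits_all:
  fixes f :: "nat \<Rightarrow> nat" and n v :: nat
  assumes "f 0 = 0" "\<And>t. t < n \<Longrightarrow> f (Suc t) \<le> Suc (f t)" "v \<le> f n"
  shows "\<exists>t\<le>n. f t = v"
  using assms(2,3)
proof (induction n)
  case 0
  then show ?case using assms(1) by simp
next
  case (Suc n)
  show ?case
  proof (cases "v \<le> f n")
    case True
    have "\<exists>t\<le>n. f t = v" by (rule Suc.IH[OF _ True]) (use Suc.prems(1) in simp)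
    then show ?thesis using le_SucI by blast
  next
    case False
    have "f (Suc n) \<le> Suc (f n)" using Suc.prems(1) by simp
    then have "v = f (Suc n)" using False Suc.prems(2) by linarith
    then show ?thesis by blast
  qed
qed

text \<open>Each vertex of \<open>Q\<close> sits at some position of \<open>P\<close>; since \<open>P\<close> is induced, consecutive
  vertices of \<open>Q\<close> sit at positions differing by one, and these positions run from the first
  to the last position of \<open>P\<close>, hence pass through all of them.\<close>
lemma induced_path_covered_by_path:
  assumes ind: "is_induced_path Eg P"
    and onlyU: "\<forall>y\<in>set P. y \<in> U \<longrightarrow> y = hd P"
    and onlyV: "\<forall>y\<in>set P. y \<in> V \<longrightarrow> y = last P"
    and Q: "is_path Eg Q" "set Q \<subseteq> set P" "hd Q \<in> U" "last Q \<in> V"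
  shows "set P \<subseteq> set Q"
proof
  have Pne: "P \<noteq> []" and dP: "distinct P" and Qne: "Q \<noteq> []"
    using is_induced_path_is_path[OF ind] Q(1) by (auto simp: is_path_def)
  have "\<forall>t. \<exists>i. t < length Q \<longrightarrow> i < length P \<and> P ! i = Q ! t"
    using Q(2) by (metis in_set_conv_nth nth_mem subsetD)
  then obtain f where f: "\<And>t. t < length Q \<Longrightarrow> f t < length P \<and> P ! f t = Q ! t"
    by metis
  have f0: "f 0 = 0"
  proof -
    have "P ! f 0 = hd P" using f[of 0] Qne Q(3) onlyU nth_mem by (fastforce simp: hd_conv_nth)
    then show ?thesis using f[of 0] Qne Pne nth_eq_iff_index_eq[OF dP, of "f 0" 0] by (simp add: hd_conv_nth)
  qed
  have flast: "f (length Q - 1) = length P - 1"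
  proof -
    have "P ! f (length Q - 1) = last P"
      using f[of "length Q - 1"] Qne Q(4) onlyV nth_mem by (fastforce simp: last_conv_nth)
    then show ?thesis
      using f[of "length Q - 1"] Qne Pne nth_eq_iff_index_eq[OF dP, of "f (length Q - 1)" "length P - 1"]
      by (simp add: last_conv_nth)
  qed
  have step: "f (Suc t) \<le> Suc (f t)" if "t < length Q - 1" for t
  proof -
    have "Eg (Q ! t) (Q ! Suc t)" using Q(1) that by (simp add: is_path_def)
    then have "f (Suc t) = Suc (f t) \<or> f t = Suc (f (Suc t))"
      using is_induced_pathD[OF ind] f[of t] f[of "Suc t"] that by simp
    then show ?thesis by auto
  qed
  fix y assume "y \<in> set P"
  then obtain v where v: "v < length P" "P ! v = y" by (auto simp: in_set_conv_nth)
  have "\<exists>t\<le>length Q - 1. f t = v"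
    using f0 step flast v(1) by (intro nat_fun_bounded_steps_hits_all) auto
  then obtain t where t: "t \<le> length Q - 1" "f t = v" by blast
  then have "t < length Q" using Qne by (cases Q) auto
  then show "y \<in> set Q" using f[of t] t(2) v by (metis nth_mem)
qed

lemma uv_rung_iff:
  "uv_rung Eg S U V P \<longleftrightarrow> is_induced_path Eg P \<and> set P \<subseteq> S \<and> hd P \<in> U \<and> last P \<in> V \<and>
     (\<forall>y\<in>set P. y \<in> U \<longrightarrow> y = hd P) \<and> (\<forall>y\<in>set P. y \<in> V \<longrightarrow> y = last P)"
  (is "_ \<longleftrightarrow> ?ind \<and> ?S \<and> ?hd \<and> ?last \<and> ?onlyU \<and> ?onlyV")
proof
  assume rung: "uv_rung Eg S U V P"
  then have "?ind \<and> ?S \<and> ?hd \<and> ?last" by (simp add: uv_rung_def uv_path_def)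
  then show "?ind \<and> ?S \<and> ?hd \<and> ?last \<and> ?onlyU \<and> ?onlyV"
    using uv_rung_hd_unique[OF rung] uv_rung_last_unique[OF rung] by blast
next
  assume P: "?ind \<and> ?S \<and> ?hd \<and> ?last \<and> ?onlyU \<and> ?onlyV"
  have "\<not> set Q \<subset> set P" if "uv_path Eg S U V Q" for Q
    using that P induced_path_covered_by_path[of Eg P U V Q] by (auto simp: uv_path_def)
  then show "uv_rung Eg S U V P"
    using P is_induced_path_is_path[of Eg P] by (auto simp: uv_rung_def uv_path_def)
qed

lemma uv_rung_subset: "uv_rung Eg S U V P \<Longrightarrow> set P \<subseteq> T \<Longrightarrow> uv_rung Eg T U V P"
  by (simp add: uv_rung_iff)

lemma uv_rung_rev:
  assumes "uv_rung Eg S U V P" "\<And>x y. Eg x y \<Longrightarrow> Eg y x"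
  shows "uv_rung Eg S V U (rev P)"
proof -
  have "P \<noteq> []" using assms(1) by (auto simp: uv_rung_def uv_path_def is_path_def)
  then show ?thesis using assms is_induced_path_rev by (auto simp: uv_rung_iff hd_rev last_rev)
qed

section \<open>Connectivity of multigraphs\<close>

lemma madj_sym: "madj N Ed f x y \<Longrightarrow> madj N Ed f y x"
  by (auto simp: madj_def insert_commute)

lemma madj_neq: "madj N Ed f x y \<Longrightarrow> x \<noteq> y"
  by (simp add: madj_def)

lemma is_path_madj_subset:
  assumes "is_path (madj N Ed f) Q" "hd Q \<in> N"
  shows "set Q \<subseteq> N"
proof
  fix y assume "y \<in> set Q"
  then obtain i where i: "i < length Q" "Q ! i = y" by (auto simp: in_set_conv_nth)
  show "y \<in> N"
  proof (cases i)
    case 0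
    then show ?thesis using i assms(2) by (cases Q) auto
  next
    case (Suc k)
    then have "madj N Ed f (Q ! k) (Q ! Suc k)" using assms(1) i unfolding is_path_def by blast
    then show ?thesis using i Suc by (simp add: madj_def)
  qed
qed

lemma rtranclp_madj_mono:
  assumes "(madj N Ed f)\<^sup>*\<^sup>* x y" "N \<subseteq> N'" "Ed \<subseteq> Ed'"
  shows "(madj N' Ed' f)\<^sup>*\<^sup>* x y"
proof -
  have "madj N Ed f u v \<longrightarrow> madj N' Ed' f u v" for u v
    using assms(2,3) unfolding madj_def by blast
  then show ?thesis using assms(1) mono_rtranclp by metis
qed

lemma mconnected_mono_edges: "mconnected N Ed f \<Longrightarrow> Ed \<subseteq> Ed' \<Longrightarrow> mconnected N Ed' f"
  unfolding mconnected_def using rtranclp_madj_mono[of N Ed f _ _ N Ed'] by blast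

lemma mconnected_insert:
  assumes conn: "mconnected N Ed f" and e: "Z \<in> N" "e \<in> Ed" "f e = {Z, Y}"
  shows "mconnected (insert Y N) Ed f"
proof (cases "Y \<in> N")
  case True
  then show ?thesis using conn by (simp add: insert_absorb)
next
  case False
  have YZ: "madj (insert Y N) Ed f Y Z" using e False by (auto simp: madj_def insert_commute)
  have old: "(madj (insert Y N) Ed f)\<^sup>*\<^sup>* a b" if "a \<in> N" "b \<in> N" for a b
    using conn that rtranclp_madj_mono[of N Ed f a b "insert Y N" Ed] unfolding mconnected_def by blast
  have "(madj (insert Y N) Ed f)\<^sup>*\<^sup>* Y b" "(madj (insert Y N) Ed f)\<^sup>*\<^sup>* b Y" if "b \<in> insert Y N" for b
    using that old[OF e(1)] old[OF _ e(1)] YZ madj_sym[OF YZ]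
    by (auto intro: converse_rtranclp_into_rtranclp rtranclp.rtrancl_into_rtrancl)
  then show ?thesis using old unfolding mconnected_def by blast
qed

lemma mconnected_crossing_edge:
  assumes "mconnected N Ed f" "a \<in> N" "a \<in> A" "b \<in> N" "b \<notin> A"
  obtains e x y where "e \<in> Ed" "x \<in> N" "x \<in> A" "y \<in> N" "y \<notin> A" "f e = {x, y}"
proof (rule ccontr)
  assume none: "\<not> thesis"
  have "(madj N Ed f)\<^sup>*\<^sup>* a b" using assms unfolding mconnected_def by blast
  then have "b \<in> A"
    by (induction rule: rtranclp_induct) (use assms(3) none that in \<open>auto simp: madj_def\<close>)
  then show False using assms(5) by simp
qed

lemma rtranclp_madj_map:
  assumes "(madj N Ed f)\<^sup>*\<^sup>* a b"
    and "\<And>x y. madj N Ed f x y \<Longrightarrow> \<phi> x = \<phi> y \<or> madj N' Ed' f' (\<phi> x) (\<phi> y)"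
  shows "(madj N' Ed' f')\<^sup>*\<^sup>* (\<phi> a) (\<phi> b)"
  using assms(1)
proof (induction rule: rtranclp_induct)
  case (step y z)
  then show ?case using assms(2)[OF step(2)] by (metis rtranclp.rtrancl_into_rtrancl)
qed simp

lemma rtranclp_first_hit_path:
  assumes "R\<^sup>*\<^sup>* u t" "t \<in> T" "u \<notin> T" "\<And>x y. R x y \<Longrightarrow> x \<noteq> y"
  shows "\<exists>Q. is_path R Q \<and> hd Q = u \<and> last Q \<in> T \<and> (\<forall>y\<in>set (butlast Q). y \<notin> T)"
  using assms(1-3)
proof (induction rule: converse_rtranclp_induct)
  case (step u u')
  show ?case
  proof (cases "u' \<in> T")
    case True
    then show ?thesis
      using step(1,5) assms(4) by (intro exI[of _ "[u, u']"]) (auto simp: is_path_Cons_iff)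
  next
    case False
    then obtain Q where Q: "is_path R Q" "hd Q = u'" "last Q \<in> T" "\<forall>y\<in>set (butlast Q). y \<notin> T"
      using step by blast
    have Qne: "Q \<noteq> []" using Q by (simp add: is_path_def)
    show ?thesis
    proof (cases "u \<in> set Q")
      case True
      then obtain ys zs where Q_split: "Q = ys @ u # zs" by (meson split_list)
      then have "is_path R (u # zs)" using Q(1) is_path_appendD2 by blast
      moreover have "set (butlast (u # zs)) \<subseteq> set (butlast Q)" by (simp add: Q_split butlast_append)
      ultimately show ?thesis using Q Q_split by (intro exI[of _ "u # zs"]) auto
    next
      case False
      then show ?thesis
        using Q Qne step(1,5) by (intro exI[of _ "u # Q"]) (auto simp: is_path_Cons_iff)
    qed
  qed
qed simp

section \<open>Paths of arcs\<close>

definition arc_adj :: "'a mgraph \<Rightarrow> 'a set set \<Rightarrow> 'a set \<Rightarrow> 'a set \<Rightarrow> bool" where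
  "arc_adj H A x y \<longleftrightarrow> (\<exists>F\<in>A. ends H F = {x, y})"

lemma arc_adj_sym: "arc_adj H A x y \<Longrightarrow> arc_adj H A y x"
  by (auto simp: arc_adj_def insert_commute)

lemma arc_adj_mono: "arc_adj H A x y \<Longrightarrow> A \<subseteq> B \<Longrightarrow> arc_adj H B x y"
  by (auto simp: arc_adj_def)

definition arc_path_through :: "'a mgraph \<Rightarrow> 'a set set \<Rightarrow> 'a set \<Rightarrow> 'a set \<Rightarrow> 'a set \<Rightarrow> bool" where
  "arc_path_through H A a b E \<longleftrightarrow> (\<exists>Ws. is_path (arc_adj H A) Ws \<and> hd Ws = a \<and> last Ws = b \<and>
      (\<exists>j. Suc j < length Ws \<and> ends H E = {Ws ! j, Ws ! Suc j}))"

lemma arc_path_through_sym: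
  assumes "arc_path_through H A a b E"
  shows "arc_path_through H A b a E"
proof -
  obtain Ws j where W: "is_path (arc_adj H A) Ws" "hd Ws = a" "last Ws = b" "Suc j < length Ws"
    "ends H E = {Ws ! j, Ws ! Suc j}" using assms unfolding arc_path_through_def by blast
  let ?j = "length Ws - Suc (Suc j)"
  have "is_path (arc_adj H A) (rev Ws)" using W(1) arc_adj_sym is_path_rev by metis
  moreover have "hd (rev Ws) = b" "last (rev Ws) = a"
    using W is_path_def by (auto simp: hd_rev last_rev)
  moreover have "ends H E = {rev Ws ! ?j, rev Ws ! Suc ?j}" "Suc ?j < length (rev Ws)"
    using W(4,5) by (auto simp: rev_nth Suc_diff_Suc insert_commute)
  ultimately show ?thesis unfolding arc_path_through_def by blast
qed

lemma arc_path_through_mono: "arc_path_through H A a b E \<Longrightarrow> A \<subseteq> B \<Longrightarrow> arc_path_through H B a b E"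
  unfolding arc_path_through_def using is_path_mono arc_adj_mono by metis

lemma arcs_along_arc_path:
  assumes "is_path (arc_adj H A) Ws" "Suc j < length Ws" "E \<in> A" "ends H E = {Ws ! j, Ws ! Suc j}"
  obtains ar where "\<And>i. Suc i < length Ws \<Longrightarrow> ar i \<in> A"
    "\<And>i. Suc i < length Ws \<Longrightarrow> ends H (ar i) = {Ws ! i, Ws ! Suc i}" "ar j = E"
proof -
  have "\<exists>F. Suc i < length Ws \<longrightarrow> F \<in> A \<and> ends H F = {Ws ! i, Ws ! Suc i} \<and> (i = j \<longrightarrow> F = E)" for i
  proof (cases "i = j")
    case True
    then show ?thesis using assms(3,4) by (intro exI[of _ E]) simp
  next
    case False
    then show ?thesis using assms(1) by (auto simp: is_path_def arc_adj_def)
  qed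
  then obtain ar where "\<forall>i. Suc i < length Ws \<longrightarrow>
      ar i \<in> A \<and> ends H (ar i) = {Ws ! i, Ws ! Suc i} \<and> (i = j \<longrightarrow> ar i = E)"
    by metis
  then show ?thesis using that assms(2) by blast
qed

section \<open>Nets and their rungs\<close>

locale xnet =
  fixes Eg :: "'a \<Rightarrow> 'a \<Rightarrow> bool" and X :: "'a set" and H :: "'a mgraph"
  assumes net: "is_net Eg X H"
begin

lemma net_conditions:
  "finite (nodes H)" "finite (arcs H)" "\<forall>V\<in>nodes H. V \<subseteq> X" "\<forall>E\<in>arcs H. E \<subseteq> X"
  "\<forall>E\<in>arcs H. ends H E \<subseteq> nodes H" "\<forall>E\<in>arcs H. card (ends H E) = 2"
  "mconnected (nodes H) (arcs H) (ends H)" "mbiconnected (nodes H) (nabla_edges H) (nabla_ends H)"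
  "\<forall>E\<in>arcs H. E \<noteq> {}" "\<forall>E\<in>arcs H. \<forall>F\<in>arcs H. E \<noteq> F \<longrightarrow> E \<inter> F = {}" "\<Union>(arcs H) = X"
  "card (leaf_nodes H) = 3" "\<forall>L\<in>leaf_nodes H. \<exists>v. L = {v} \<and> g_leaf Eg v"
  "\<forall>E\<in>arcs H. \<forall>U V. ends H E = {U, V} \<longrightarrow> (\<forall>x\<in>E. \<exists>P. uv_rung Eg E U V P \<and> x \<in> set P)"
  "\<forall>E\<in>arcs H. \<forall>V\<in>nodes H. E \<inter> V \<noteq> {} \<longleftrightarrow> V \<in> ends H E"
  "\<forall>E\<in>arcs H. \<forall>F\<in>arcs H. \<forall>u v. E \<noteq> F \<longrightarrow> u \<in> E \<longrightarrow> v \<in> F \<longrightarrow>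
     (Eg u v \<longleftrightarrow> (\<exists>V \<in> ends H E \<inter> ends H F. u \<in> V \<and> v \<in> V))"
  using net unfolding is_net_def by simp_all

lemmas finite_nodes = net_conditions(1)
  and finite_arcs = net_conditions(2)
  and nodes_subset = net_conditions(3)[rule_format]
  and arcs_subset = net_conditions(4)[rule_format]
  and arc_ends_subset = net_conditions(5)[rule_format]
  and card_arc_ends = net_conditions(6)[rule_format]
  and arcs_connected = net_conditions(7)
  and nabla_biconnected = net_conditions(8)
  and arc_nonempty = net_conditions(9)[rule_format]
  and arcs_disjoint = net_conditions(10)[rule_format]
  and Union_arcs = net_conditions(11)
  and card_leaf_nodes = net_conditions(12)
  and leaf_node_singleton = net_conditions(13)[rule_format]
  and arc_rung = net_conditions(14)[rule_format]
  and arc_meets_node_iff = net_conditions(15)[rule_format]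
  and adj_across_arcs_iff = net_conditions(16)[rule_format]

lemma arc_ends_pair:
  assumes "E \<in> arcs H"
  obtains U V where "U \<noteq> V" "ends H E = {U, V}"
  using card_arc_ends[OF assms] card_2_iff that by metis

lemma nabla_edge_ends:
  assumes "e \<in> nabla_edges H"
  shows "nabla_ends H e \<subseteq> nodes H \<and> card (nabla_ends H e) = 2"
proof -
  from assms consider (arc) F where "e = ArcE F" "F \<in> arcs H"
    | (leaf) L1 L2 where "e = LeafE {L1, L2}" "L1 \<in> leaf_nodes H" "L2 \<in> leaf_nodes H" "L1 \<noteq> L2"
    unfolding nabla_edges_def by blast
  then show ?thesis
    by cases (auto simp: arc_ends_subset card_arc_ends leaf_nodes_def)
qed

lemma nabla_connected_minus: "v \<in> nodes H \<Longrightarrow> mconnected (nodes H - {v}) (nabla_edges H) (nabla_ends H)"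
  using nabla_biconnected unfolding mbiconnected_def by blast

lemma arc_adj_neq: "arc_adj H A x y \<Longrightarrow> A \<subseteq> arcs H \<Longrightarrow> x \<noteq> y"
  using card_arc_ends by (fastforce simp: arc_adj_def)

lemma arc_glued_at_node:
  assumes A: "A \<subseteq> arcs H" and F: "F \<in> arcs H" "F \<notin> A" "W \<in> ends H F"
    and meet: "\<And>F'. F' \<in> A \<Longrightarrow> ends H F' \<inter> ends H F \<subseteq> {W}"
  shows "\<Union>A \<inter> F = {}"
    and "u \<in> \<Union>A \<Longrightarrow> v \<in> F \<Longrightarrow> Eg u v \<longleftrightarrow> u \<in> W \<and> v \<in> W"
    and "u \<in> \<Union>A \<Longrightarrow> V \<in> ends H F \<Longrightarrow> V \<noteq> W \<Longrightarrow> u \<notin> V"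
proof -
  have arc_of: "\<exists>F'. F' \<in> A \<and> F' \<in> arcs H \<and> F' \<noteq> F \<and> u \<in> F'" if "u \<in> \<Union>A" for u
    using that A F(2) by blast
  show "\<Union>A \<inter> F = {}"
  proof (intro equalityI subsetI)
    fix u assume "u \<in> \<Union>A \<inter> F"
    then obtain F' where "F' \<in> arcs H" "F' \<noteq> F" "u \<in> F'" "u \<in> F" using arc_of by blast
    then show "u \<in> {}" using arcs_disjoint[OF _ F(1)] by blast
  qed simp
  show "Eg u v \<longleftrightarrow> u \<in> W \<and> v \<in> W" if u: "u \<in> \<Union>A" and v: "v \<in> F"
  proof -
    obtain F' where F': "F' \<in> A" "F' \<in> arcs H" "F' \<noteq> F" "u \<in> F'" using arc_of[OF u] by blast
    note adj = adj_across_arcs_iff[OF F'(2) F(1) F'(3,4) v]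
    have "W \<in> nodes H" using F(1,3) arc_ends_subset by blast
    then have "u \<in> W \<Longrightarrow> W \<in> ends H F'" using arc_meets_node_iff[OF F'(2)] F'(4) by blast
    then show ?thesis using adj meet[OF F'(1)] F(3) by blast
  qed
  show "u \<notin> V" if u: "u \<in> \<Union>A" and V: "V \<in> ends H F" "V \<noteq> W"
  proof
    assume "u \<in> V"
    obtain F' where F': "F' \<in> A" "F' \<in> arcs H" "u \<in> F'" using arc_of[OF u] by blast
    have "V \<in> nodes H" using F(1) V(1) arc_ends_subset by blast
    then have "V \<in> ends H F'" using arc_meets_node_iff[OF F'(2)] F'(3) \<open>u \<in> V\<close> by blast
    then show False using meet[OF F'(1)] V by blast
  qed
qed

text \<open>Condition (N6) confines the edges between the two rungs to the common node \<open>W\<close>, where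
  both have only an endpoint.\<close>
lemma uv_rung_append_arc:
  assumes sym: "\<And>x y. Eg x y \<Longrightarrow> Eg y x"
    and P: "uv_rung Eg (\<Union>A) U W P" and A: "A \<subseteq> arcs H"
    and F: "F \<in> arcs H" "F \<notin> A" "ends H F = {W, W'}" and U: "U \<in> nodes H" "U \<notin> ends H F"
    and meet: "\<And>F'. F' \<in> A \<Longrightarrow> ends H F' \<inter> ends H F \<subseteq> {W}"
    and R: "uv_rung Eg F W W' R"
  shows "uv_rung Eg (\<Union>A \<union> F) U W' (P @ R)"
proof -
  have "W \<in> ends H F" using F(3) by simp
  note glued = arc_glued_at_node[OF A F(1,2) this meet]
  have WW': "W \<noteq> W'" using card_arc_ends[OF F(1)] F(3) by auto
  have Pr: "is_induced_path Eg P" "set P \<subseteq> \<Union>A" "hd P \<in> U" "last P \<in> W"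
    "\<forall>y\<in>set P. y \<in> U \<longrightarrow> y = hd P" "\<forall>y\<in>set P. y \<in> W \<longrightarrow> y = last P"
    using P by (simp_all add: uv_rung_iff)
  have Rr: "is_induced_path Eg R" "set R \<subseteq> F" "hd R \<in> W" "last R \<in> W'"
    "\<forall>y\<in>set R. y \<in> W \<longrightarrow> y = hd R" "\<forall>y\<in>set R. y \<in> W' \<longrightarrow> y = last R"
    using R by (simp_all add: uv_rung_iff)
  have Pne: "P \<noteq> []" and Rne: "R \<noteq> []"
    using Pr(1) Rr(1) is_induced_path_is_path by (auto simp: is_path_def)
  have adj: "Eg u v \<longleftrightarrow> u \<in> W \<and> v \<in> W" if "u \<in> set P" "v \<in> set R" for u v
    using glued(2)[of u v] F(3) that Pr(2) Rr(2) by blast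
  have "is_induced_path Eg (P @ R)"
  proof (rule is_induced_path_append[OF Pr(1) Rr(1)])
    have "set P \<inter> set R \<subseteq> \<Union>A \<inter> F" by (rule Int_mono[OF Pr(2) Rr(2)])
    then show "set P \<inter> set R = {}" using glued(1) by simp
    show "Eg (last P) (hd R)" using adj Pne Rne Pr(4) Rr(3) by simp
    fix u v assume uv: "u \<in> set P" "v \<in> set R" "Eg u v \<or> Eg v u"
    then have "u \<in> W" "v \<in> W" using adj sym by blast+
    then show "u = last P \<and> v = hd R" using Pr(6) Rr(5) uv by blast
  qed
  moreover have "y = hd P" if "y \<in> set (P @ R)" "y \<in> U" for y
  proof (cases "y \<in> set P")
    case False
    then have "F \<inter> U \<noteq> {}" using that Rr(2) by auto
    then show ?thesis using arc_meets_node_iff[OF F(1) U(1)] U(2) by blast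
  qed (use Pr(5) that in blast)
  moreover have "y = last R" if "y \<in> set (P @ R)" "y \<in> W'" for y
  proof (cases "y \<in> set P")
    case True
    then show ?thesis using glued(3)[of y W'] Pr(2) F(3) WW' that(2) by blast
  qed (use Rr(6) that in simp)
  moreover have "set (P @ R) \<subseteq> \<Union>A \<union> F" "hd (P @ R) = hd P" "last (P @ R) = last R"
    using Pr(2) Rr(2) Pne Rne by auto
  ultimately show ?thesis unfolding uv_rung_iff using Pr(3) Rr(4) by metis
qed

lemma uv_rung_along_arc_path:
  assumes sym: "\<And>x y. Eg x y \<Longrightarrow> Eg y x" and dW: "distinct Ws"
    and ar: "\<And>i. Suc i < length Ws \<Longrightarrow> ar i \<in> arcs H \<and> ends H (ar i) = {Ws ! i, Ws ! Suc i}"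
    and R: "\<And>i. Suc i < length Ws \<Longrightarrow> uv_rung Eg (ar i) (Ws ! i) (Ws ! Suc i) (R i)"
    and k: "0 < k" "k < length Ws"
  shows "uv_rung Eg (\<Union>i<k. ar i) (Ws ! 0) (Ws ! k) (concat (map R [0..<k]))"
  using k
proof (induction k rule: nat_induct_non_zero)
  case 1
  then show ?case using R[of 0] by (simp add: lessThan_Suc)
next
  case (Suc k)
  have W_eq: "Ws ! i = Ws ! i' \<longleftrightarrow> i = i'" if "i < length Ws" "i' < length Ws" for i i'
    using dW that by (simp add: nth_eq_iff_index_eq)
  have ends_k: "ends H (ar k) = {Ws ! k, Ws ! Suc k}" using ar Suc.prems by blast
  have ends_i: "ends H (ar i) = {Ws ! i, Ws ! Suc i}" "Ws ! i \<noteq> Ws ! k" "Ws ! i \<noteq> Ws ! Suc k"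
    "Ws ! Suc i \<noteq> Ws ! Suc k" if "i < k" for i
    using ar W_eq[of i k] W_eq[of i "Suc k"] W_eq[of "Suc i" "Suc k"] that Suc.prems by auto
  have "uv_rung Eg (\<Union>(ar ` {..<k}) \<union> ar k) (Ws ! 0) (Ws ! Suc k) (concat (map R [0..<k]) @ R k)"
  proof (rule uv_rung_append_arc[OF sym _ _ _ _ ends_k _ _ _ R[OF Suc.prems]])
    show "uv_rung Eg (\<Union>(ar ` {..<k})) (Ws ! 0) (Ws ! k) (concat (map R [0..<k]))"
      using Suc by simp
    show "ar ` {..<k} \<subseteq> arcs H" "ar k \<in> arcs H" "Ws ! 0 \<in> nodes H"
      using ar Suc.prems arc_ends_subset[of "ar 0"] by force+
    show "Ws ! 0 \<notin> ends H (ar k)" using ends_i(2,3)[of 0] ends_k Suc.hyps by auto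
    show "ends H F' \<inter> ends H (ar k) \<subseteq> {Ws ! k}" if F': "F' \<in> ar ` {..<k}" for F'
    proof -
      obtain i where "i < k" "F' = ar i" using F' by blast
      then show ?thesis using ends_i[OF \<open>i < k\<close>] ends_k by auto
    qed
    show "ar k \<notin> ar ` {..<k}"
    proof
      assume "ar k \<in> ar ` {..<k}"
      then obtain i where "i < k" "{Ws ! i, Ws ! Suc i} = {Ws ! k, Ws ! Suc k}"
        using ends_i(1) ends_k by (metis imageE lessThan_iff)
      then show False using ends_i(2,3) by (auto simp: doubleton_eq_iff)
    qed
  qed
  moreover have "(\<Union>i<Suc k. ar i) = \<Union>(ar ` {..<k}) \<union> ar k" by (auto simp: lessThan_Suc)
  ultimately show ?case by simp
qed

lemma rungs_along_arcs:
  assumes ar: "\<And>i. i < m \<Longrightarrow> ar i \<in> arcs H" "\<And>i. i < m \<Longrightarrow> ends H (ar i) = {Ws ! i, Ws ! Suc i}"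
    and x: "j < m" "x \<in> ar j"
  obtains R where "\<And>i. i < m \<Longrightarrow> uv_rung Eg (ar i) (Ws ! i) (Ws ! Suc i) (R i)" "x \<in> set (R j)"
proof -
  have "\<exists>P. i < m \<longrightarrow> uv_rung Eg (ar i) (Ws ! i) (Ws ! Suc i) P \<and> (i = j \<longrightarrow> x \<in> set P)" for i
  proof (cases "i < m")
    case True
    obtain y where y: "y \<in> ar i" "i = j \<longrightarrow> y = x"
      using arc_nonempty[OF ar(1)[OF True]] x(2) by (cases "i = j") auto
    then obtain P where "uv_rung Eg (ar i) (Ws ! i) (Ws ! Suc i) P" "y \<in> set P"
      using arc_rung[OF ar(1)[OF True] ar(2)[OF True]] by blast
    then show ?thesis using y(2) by blast
  qed simp
  then obtain R where "\<forall>i. i < m \<longrightarrow> uv_rung Eg (ar i) (Ws ! i) (Ws ! Suc i) (R i) \<and> (i = j \<longrightarrow> x \<in> set (R i))"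
    by metis
  then show ?thesis using that x(1) by blast
qed

lemma uv_rung_through_arc:
  assumes sym: "\<And>x y. Eg x y \<Longrightarrow> Eg y x" and A: "A \<subseteq> arcs H"
    and path: "arc_path_through H A a b E" and E: "E \<in> A" "x \<in> E"
  shows "\<exists>P. uv_rung Eg (\<Union>A) a b P \<and> x \<in> set P"
proof -
  obtain Ws j where W: "is_path (arc_adj H A) Ws" "hd Ws = a" "last Ws = b" "Suc j < length Ws"
    "ends H E = {Ws ! j, Ws ! Suc j}" using path unfolding arc_path_through_def by blast
  define m where "m = length Ws - 1"
  have m: "0 < m" "m < length Ws" "j < m" "Ws ! 0 = a" "Ws ! m = b"
    using W by (auto simp: m_def hd_conv_nth last_conv_nth is_path_def)
  obtain ar where ar0: "\<And>i. Suc i < length Ws \<Longrightarrow> ar i \<in> A"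
      "\<And>i. Suc i < length Ws \<Longrightarrow> ends H (ar i) = {Ws ! i, Ws ! Suc i}" "ar j = E"
    by (rule arcs_along_arc_path[OF W(1,4) E(1) W(5)]) blast
  have "Suc i < length Ws" if "i < m" for i using that by (simp add: m_def)
  then have ar: "\<And>i. i < m \<Longrightarrow> ar i \<in> A" "\<And>i. i < m \<Longrightarrow> ends H (ar i) = {Ws ! i, Ws ! Suc i}"
    "ar j = E"
    using ar0 by auto
  then have ar_arcs: "\<And>i. i < m \<Longrightarrow> ar i \<in> arcs H" using A by blast
  obtain R where R: "\<And>i. i < m \<Longrightarrow> uv_rung Eg (ar i) (Ws ! i) (Ws ! Suc i) (R i)" "x \<in> set (R j)"
    using rungs_along_arcs[OF ar_arcs ar(2) m(3)] E(2) ar(3) by blast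
  have "uv_rung Eg (\<Union>i<m. ar i) a b (concat (map R [0..<m]))"
    using uv_rung_along_arc_path[OF sym _ _ _ m(1,2), of ar R] W(1) ar_arcs ar(2) R(1) m(4,5)
    by (simp add: is_path_def m_def)
  moreover have "(\<Union>i<m. ar i) \<subseteq> \<Union>A" using ar(1) by blast
  ultimately have "uv_rung Eg (\<Union>A) a b (concat (map R [0..<m]))"
    by (meson order_trans uv_rung_iff uv_rung_subset)
  moreover have "x \<in> set (concat (map R [0..<m]))" using R(2) m(3) by auto
  ultimately show ?thesis by blast
qed

end

section \<open>Split components\<close>

definition fan :: "'a mgraph \<Rightarrow> 'a set set \<Rightarrow> 'a set set \<Rightarrow> 'a set \<Rightarrow> 'a set \<Rightarrow> 'a set \<Rightarrow> 'a set \<Rightarrow> bool"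
  where "fan H A K a b u w \<longleftrightarrow> (\<exists>P1 P2. is_path (arc_adj H A) P1 \<and> is_path (arc_adj H A) P2 \<and>
     hd P1 = u \<and> hd P2 = u \<and> last P1 = a \<and> last P2 = b \<and> set P1 \<inter> set P2 = {u} \<and>
     set P1 - {a} \<subseteq> K \<and> set P2 - {b} \<subseteq> K \<and>
     (tl P1 \<noteq> [] \<and> hd (tl P1) = w \<or> tl P2 \<noteq> [] \<and> hd (tl P2) = w))"

lemma fan_swap: "fan H A K a b u w \<Longrightarrow> fan H A K b a u w"
  unfolding fan_def by (metis inf_commute)

lemma fanI:
  assumes "is_path (arc_adj H A) P1" "is_path (arc_adj H A) P2" "hd P1 = u" "hd P2 = u"
    "last P1 = a" "last P2 = b" "set P1 \<inter> set P2 = {u}" "set P1 - {a} \<subseteq> K" "set P2 - {b} \<subseteq> K"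
    "tl P1 \<noteq> [] \<and> hd (tl P1) = w \<or> tl P2 \<noteq> [] \<and> hd (tl P2) = w"
  shows "fan H A K a b u w"
  using assms unfolding fan_def by blast

locale split_comp = xnet +
  fixes V1 V2 :: "'a set" and N' :: "'a set set" and Ed' :: "'a nabla_edge set"
  assumes cut: "is_cutpair H V1 V2"
    and sub: "nabla_subgraph H N' Ed'"
    and arc_edges: "Ed' \<subseteq> ArcE ` arcs H"
    and sc: "sc_prop H V1 V2 N' Ed'"
    and maximal: "\<And>N'' Ed''. nabla_subgraph H N'' Ed'' \<Longrightarrow> sc_prop H V1 V2 N'' Ed'' \<Longrightarrow>
       N' \<subseteq> N'' \<Longrightarrow> Ed' \<subseteq> Ed'' \<Longrightarrow> N'' = N' \<and> Ed'' = Ed'"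
begin

abbreviation "inner \<equiv> N' - {V1, V2}"
abbreviation "comp_arcs \<equiv> {E. ArcE E \<in> Ed'}"

lemma split_comp_swap: "split_comp Eg X H V2 V1 N' Ed'"
proof -
  have "sc_prop H V2 V1 = sc_prop H V1 V2" by (intro ext) (auto simp: sc_prop_def insert_commute)
  moreover have "is_cutpair H V2 V1" using cut by (auto simp: is_cutpair_def insert_commute)
  ultimately show ?thesis using net sub arc_edges sc maximal by unfold_locales auto
qed

lemma split_pair: "V1 \<noteq> V2" "V1 \<in> nodes H" "V2 \<in> nodes H"
  using cut by (auto simp: is_cutpair_def)

lemma split_pair_in_comp: "V1 \<in> N'" "V2 \<in> N'"
  using sc by (auto simp: sc_prop_def)

lemma comp_nodes_subset: "N' \<subseteq> nodes H"
  using sub by (simp add: nabla_subgraph_def)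

lemma comp_arcs_subset: "comp_arcs \<subseteq> arcs H"
  using arc_edges by auto

lemma comp_arc_ends:
  assumes "E \<in> comp_arcs"
  shows "ends H E \<subseteq> N'"
proof -
  have "nabla_ends H (ArcE E) \<subseteq> N'" using sub assms unfolding nabla_subgraph_def by blast
  then show ?thesis by simp
qed

lemma comp_arc_not_split_pair: "E \<in> comp_arcs \<Longrightarrow> ends H E \<noteq> {V1, V2}"
  using sc by (auto simp: sc_prop_def)

lemma inner_connected: "mconnected inner Ed' (nabla_ends H)"
  using sc by (simp add: sc_prop_def)

text \<open>By maximality, a split component contains every edge of \<open>\<nabla>(H)\<close> at an inner node: adding
  such an edge together with its other end keeps the inner part connected.\<close>
lemma inner_edge_in_comp:
  assumes Z: "Z \<in> inner" and e: "e \<in> nabla_edges H" "Z \<in> nabla_ends H e"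
  shows "e \<in> Ed'"
proof -
  obtain p q where pq: "nabla_ends H e = {p, q}" "p \<noteq> q"
    using nabla_edge_ends[OF e(1)] by (auto simp: card_2_iff)
  define Y where "Y = (if p = Z then q else p)"
  have Y: "nabla_ends H e = {Z, Y}" using pq e(2) by (auto simp: Y_def)
  have "Y \<in> nodes H" using nabla_edge_ends[OF e(1)] Y by auto
  have old_ends: "nabla_ends H e' \<subseteq> N'" if "e' \<in> Ed'" for e'
    using sub that by (simp add: nabla_subgraph_def)
  have "nabla_subgraph H (insert Y N') (insert e Ed')"
    unfolding nabla_subgraph_def
  proof (intro conjI ballI)
    show "insert Y N' \<subseteq> nodes H" using \<open>Y \<in> nodes H\<close> comp_nodes_subset by blast
    show "insert e Ed' \<subseteq> nabla_edges H" using sub e(1) by (simp add: nabla_subgraph_def)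
    show "nabla_ends H e' \<subseteq> insert Y N'" if "e' \<in> insert e Ed'" for e'
      using that old_ends Y Z by auto
  qed
  moreover have "sc_prop H V1 V2 (insert Y N') (insert e Ed')"
  proof -
    have conn: "mconnected inner (insert e Ed') (nabla_ends H)"
      using mconnected_mono_edges[OF inner_connected] by blast
    have "mconnected (insert Y N' - {V1, V2}) (insert e Ed') (nabla_ends H)"
    proof (cases "Y \<in> {V1, V2}")
      case True
      then show ?thesis using conn by (simp add: insert_Diff_if)
    next
      case False
      then show ?thesis using mconnected_insert[OF conn Z, of e Y] Y by (simp add: insert_Diff_if)
    qed
    moreover have "nabla_ends H e \<noteq> {V1, V2}" using Y Z by auto
    ultimately show ?thesis using sc by (auto simp: sc_prop_def)
  qed
  ultimately show ?thesis using maximal by blast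
qed

lemma inner_edge_is_comp_arc:
  assumes "Z \<in> inner" "e \<in> nabla_edges H" "Z \<in> nabla_ends H e"
  shows "\<exists>F\<in>comp_arcs. e = ArcE F"
  using inner_edge_in_comp[OF assms] arc_edges by blast

lemma inner_nonempty: "inner \<noteq> {}"
proof
  assume inner0: "inner = {}"
  then have N': "N' = {V1, V2}" using split_pair_in_comp by auto
  obtain W where W: "W \<in> nodes H" "W \<notin> {V1, V2}"
    using cut unfolding is_cutpair_def mconnected_def by auto
  have "Ed' = {}"
  proof (rule ccontr)
    assume "Ed' \<noteq> {}"
    then obtain e where e: "e \<in> Ed'" by blast
    then have "e \<in> nabla_edges H" "nabla_ends H e \<subseteq> {V1, V2}"
      using sub N' by (auto simp: nabla_subgraph_def)
    then have "nabla_ends H e = {V1, V2}"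
      using nabla_edge_ends split_pair(1) by (metis card_2_iff card_subset_eq finite.emptyI finite.insertI)
    then show False using sc e by (auto simp: sc_prop_def)
  qed
  then have "nabla_subgraph H (insert W N') Ed'" "sc_prop H V1 V2 (insert W N') Ed'"
    using sub W N' sc by (auto simp: nabla_subgraph_def sc_prop_def mconnected_def insert_Diff_if)
  then have "insert W N' = N'" using maximal by blast
  then show False using W N' by auto
qed

lemma inner_adj_V1: "\<exists>u\<in>inner. arc_adj H comp_arcs u V1"
proof -
  obtain a where a: "a \<in> inner" using inner_nonempty by blast
  have conn: "mconnected (nodes H - {V2}) (nabla_edges H) (nabla_ends H)"
    using nabla_connected_minus split_pair by blast
  have a': "a \<in> nodes H - {V2}" and V1: "V1 \<in> nodes H - {V2}" "V1 \<notin> inner"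
    using a comp_nodes_subset split_pair by auto
  obtain e x y where exy: "e \<in> nabla_edges H" "x \<in> inner" "y \<in> nodes H - {V2}"
    "y \<notin> inner" "nabla_ends H e = {x, y}"
    by (rule mconnected_crossing_edge[OF conn a' a V1])
  obtain F where F: "F \<in> comp_arcs" "e = ArcE F" using inner_edge_is_comp_arc[OF exy(2,1)] exy(5) by auto
  then have "y \<in> N'" using comp_arc_ends exy(5) by auto
  then have "y = V1" using exy(3,4) by auto
  then show ?thesis using exy F unfolding arc_adj_def by auto
qed

lemma nabla_path_from_inner:
  assumes "is_path (madj N (nabla_edges H) (nabla_ends H)) Q" "hd Q \<in> inner"
    "\<forall>y\<in>set (butlast Q). y \<notin> {V1, V2}"
  shows "is_path (arc_adj H comp_arcs) Q \<and> set (butlast Q) \<subseteq> inner \<and> last Q \<in> N'"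
  using assms
proof (induction Q rule: induct_list012)
  case (2 x)
  then show ?case by (simp add: is_path_def)
next
  case (3 a b rest)
  have ab: "madj N (nabla_edges H) (nabla_ends H) a b" "a \<notin> set (b # rest)"
    "is_path (madj N (nabla_edges H) (nabla_ends H)) (b # rest)"
    using "3.prems"(1) by (auto simp: is_path_Cons_iff)
  obtain e where e: "e \<in> nabla_edges H" "nabla_ends H e = {a, b}" using ab(1) by (auto simp: madj_def)
  have a: "a \<in> inner" using "3.prems"(2) by simp
  obtain F where F: "F \<in> comp_arcs" "e = ArcE F" using inner_edge_is_comp_arc[OF a e(1)] e(2) by auto
  have arc_ab: "arc_adj H comp_arcs a b" using F e unfolding arc_adj_def by auto
  have b: "b \<in> N'" using F e comp_arc_ends by auto
  show ?case
  proof (cases "rest = []")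
    case True
    then show ?thesis using arc_ab b a ab(2) by (auto simp: is_path_Cons_iff)
  next
    case False
    then have "b \<in> inner" using "3.prems"(3) b by auto
    moreover have "\<forall>y\<in>set (butlast (b # rest)). y \<notin> {V1, V2}" using "3.prems"(3) False by simp
    ultimately show ?thesis using "3.IH"(2)[OF ab(3)] arc_ab ab(2) a False by (auto simp: is_path_Cons_iff)
  qed
qed (simp add: is_path_def)

lemma fan_base:
  assumes u: "u \<in> inner" and uV1: "arc_adj H comp_arcs u V1"
  shows "fan H comp_arcs inner V1 V2 u V1"
proof -
  have "(madj (nodes H - {V1}) (nabla_edges H) (nabla_ends H))\<^sup>*\<^sup>* u V2"
    using nabla_connected_minus[OF split_pair(2)] u comp_nodes_subset split_pair
    unfolding mconnected_def by blast
  then have "\<exists>Q. is_path (madj (nodes H - {V1}) (nabla_edges H) (nabla_ends H)) Q \<and>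
    hd Q = u \<and> last Q \<in> {V2} \<and> (\<forall>y\<in>set (butlast Q). y \<notin> {V2})"
    by (rule rtranclp_first_hit_path) (use u in \<open>simp_all add: madj_neq\<close>)
  then obtain Q where Q: "is_path (madj (nodes H - {V1}) (nabla_edges H) (nabla_ends H)) Q"
    "hd Q = u" "last Q = V2" "\<forall>y\<in>set (butlast Q). y \<noteq> V2"
    by auto
  have Qne: "Q \<noteq> []" using Q(1) by (simp add: is_path_def)
  have "set Q \<subseteq> nodes H - {V1}" using is_path_madj_subset[OF Q(1)] Q(2) u comp_nodes_subset by auto
  then have "\<forall>y\<in>set (butlast Q). y \<notin> {V1, V2}" using Q(4) by (auto dest: in_set_butlastD)
  then have Q': "is_path (arc_adj H comp_arcs) Q" "set (butlast Q) \<subseteq> inner"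
    using nabla_path_from_inner[OF Q(1)] Q(2) u by auto
  have "set Q = insert V2 (set (butlast Q))"
    using set_butlast_last[OF Qne] Q(3) by simp
  then have "set Q - {V2} \<subseteq> inner" using Q'(2) by blast
  moreover have "set [u, V1] \<inter> set Q = {u}"
    using \<open>set Q \<subseteq> nodes H - {V1}\<close> Q(2) Qne hd_in_set by fastforce
  moreover have "is_path (arc_adj H comp_arcs) [u, V1]" using uV1 u by (simp add: is_path_Cons_iff)
  moreover have "set [u, V1] - {V1} \<subseteq> inner" using u by auto
  ultimately show ?thesis
    using Q'(1) Q(2,3) by (intro fanI[of _ _ "[u, V1]" Q]) simp_all
qed

text \<open>Given a fan at the inner neighbour \<open>w\<close> of \<open>u\<close> that misses \<open>u\<close>, a path from \<open>u\<close> avoiding \<open>w\<close>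
  that first meets the fan on its first path can be spliced into that path; the second path is
  extended by the step \<open>u w\<close>.\<close>
lemma fan_extend:
  assumes ab: "{a, b} = {V1, V2}" and u: "u \<in> inner" and w: "w \<in> inner"
    and uw: "arc_adj H comp_arcs u w"
    and P1: "is_path (arc_adj H comp_arcs) P1" "hd P1 = w" "last P1 = a" "set P1 - {a} \<subseteq> inner"
    and P2: "is_path (arc_adj H comp_arcs) P2" "hd P2 = w" "last P2 = b" "set P2 - {b} \<subseteq> inner"
    and P12: "set P1 \<inter> set P2 = {w}" and u2: "u \<notin> set P2"
    and Q: "is_path (madj (nodes H - {w}) (nabla_edges H) (nabla_ends H)) Q" "hd Q = u"
      "last Q \<in> set P1 - {w}" "\<forall>y\<in>set (butlast Q). y \<notin> set P1 \<union> set P2 - {w}"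
  shows "fan H comp_arcs inner a b u w"
proof -
  have P1ne: "P1 \<noteq> []" and P2ne: "P2 \<noteq> []" and Qne: "Q \<noteq> []"
    using P1(1) P2(1) Q(1) by (auto simp: is_path_def)
  have "a \<in> set P1" "b \<in> set P2" "a \<noteq> w" "b \<noteq> w"
    using P1(3) P2(3) P1ne P2ne ab w by (auto simp: doubleton_eq_iff)
  then have "V1 \<in> set P1 \<union> set P2 - {w}" "V2 \<in> set P1 \<union> set P2 - {w}"
    using ab by (auto simp: doubleton_eq_iff)
  then have "\<forall>y\<in>set (butlast Q). y \<notin> {V1, V2}" using Q(4) by blast
  then have QA: "is_path (arc_adj H comp_arcs) Q" and QK: "set (butlast Q) \<subseteq> inner"
    using nabla_path_from_inner[OF Q(1)] Q(2) u by auto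
  have "w \<in> set P2" using P2(2) P2ne by auto
  then have "hd Q \<in> nodes H - {w}" using Q(2) u u2 comp_nodes_subset by blast
  then have wQ: "w \<notin> set Q" using is_path_madj_subset[OF Q(1)] by blast
  then have "set (butlast Q) \<inter> set P1 = {}" using Q(4) in_set_butlastD by fastforce
  then obtain zs where zs: "is_path (arc_adj H comp_arcs) (Q @ zs)" "last (Q @ zs) = a"
    "set zs \<subseteq> set P1 - {w}"
    using path_join_first_hit[OF QA P1(1)] Q(3) P1(2,3) by blast
  note setQ = set_butlast_last[OF Qne]
  have "set (Q @ zs) \<inter> set (u # P2) = {u}"
  proof (intro equalityI subsetI)
    fix y assume y: "y \<in> set (Q @ zs) \<inter> set (u # P2)"
    show "y \<in> {u}"
    proof (rule ccontr)
      assume "y \<notin> {u}"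
      then have "y \<in> set P2" using y by simp
      moreover have "y \<in> set (butlast Q) \<or> y \<in> set P1 - {w}" using y setQ zs(3) Q(3) by auto
      ultimately show False using Q(4) wQ setQ y P12 by blast
    qed
  qed (use hd_in_set[OF Qne] Q(2) in simp)
  moreover have "set (Q @ zs) - {a} \<subseteq> inner" using QK setQ zs(3) Q(3) P1(4) by auto
  moreover have "set (u # P2) - {b} \<subseteq> inner" using P2(4) u by auto
  moreover have "is_path (arc_adj H comp_arcs) (u # P2)"
    using P2(1,2) uw u2 P2ne by (simp add: is_path_Cons_iff)
  ultimately show ?thesis using zs(1,2) Q(2) Qne P2(2,3) P2ne
    by (intro fanI[of H comp_arcs "Q @ zs" "u # P2"]) simp_all
qed

lemma fan_step_outside:
  assumes u: "u \<in> inner" and w: "w \<in> inner" and uw: "arc_adj H comp_arcs u w"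
    and P1: "is_path (arc_adj H comp_arcs) P1" "hd P1 = w" "last P1 = V1" "set P1 - {V1} \<subseteq> inner"
    and P2: "is_path (arc_adj H comp_arcs) P2" "hd P2 = w" "last P2 = V2" "set P2 - {V2} \<subseteq> inner"
    and P12: "set P1 \<inter> set P2 = {w}" and u12: "u \<notin> set P1" "u \<notin> set P2"
  shows "fan H comp_arcs inner V1 V2 u w"
proof -
  let ?T = "set P1 \<union> set P2 - {w}"
  have "(madj (nodes H - {w}) (nabla_edges H) (nabla_ends H))\<^sup>*\<^sup>* u V1"
    using nabla_connected_minus[of w] u w comp_nodes_subset split_pair arc_adj_neq[OF uw comp_arcs_subset]
    unfolding mconnected_def by blast
  moreover have "V1 \<in> ?T" using P1(1,3) w by (auto simp: is_path_def)
  ultimately have "\<exists>Q. is_path (madj (nodes H - {w}) (nabla_edges H) (nabla_ends H)) Q \<and>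
      hd Q = u \<and> last Q \<in> ?T \<and> (\<forall>y\<in>set (butlast Q). y \<notin> ?T)"
    by (rule rtranclp_first_hit_path) (use u12 in \<open>simp_all add: madj_neq\<close>)
  then obtain Q where Q: "is_path (madj (nodes H - {w}) (nabla_edges H) (nabla_ends H)) Q"
    "hd Q = u" "last Q \<in> ?T" "\<forall>y\<in>set (butlast Q). y \<notin> ?T"
    by blast
  show ?thesis
  proof (cases "last Q \<in> set P1")
    case True
    then show ?thesis using fan_extend[OF refl u w uw P1 P2 P12 u12(2) Q(1,2) _ Q(4)] Q(3) by blast
  next
    case False
    have "set P2 \<inter> set P1 = {w}" "last Q \<in> set P2 - {w}"
      "\<forall>y\<in>set (butlast Q). y \<notin> set P2 \<union> set P1 - {w}"
      using P12 Q(3,4) False by blast+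
    then have "fan H comp_arcs inner V2 V1 u w"
      using fan_extend[OF _ u w uw P2 P1 _ u12(1) Q(1,2)] by (simp add: insert_commute)
    then show ?thesis by (rule fan_swap)
  qed
qed

lemma fan_step:
  assumes u: "u \<in> inner" and w: "w \<in> inner" and uw: "arc_adj H comp_arcs u w"
    and fan_w: "fan H comp_arcs inner V1 V2 w w'"
  shows "fan H comp_arcs inner V1 V2 u w"
proof -
  obtain P1 P2 where P1: "is_path (arc_adj H comp_arcs) P1" "hd P1 = w" "last P1 = V1"
      "set P1 - {V1} \<subseteq> inner"
    and P2: "is_path (arc_adj H comp_arcs) P2" "hd P2 = w" "last P2 = V2" "set P2 - {V2} \<subseteq> inner"
    and P12: "set P1 \<inter> set P2 = {w}"
    using fan_w unfolding fan_def by (elim exE conjE) (rule that; assumption)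
  have P1ne: "P1 \<noteq> []" and P2ne: "P2 \<noteq> []" using P1(1) P2(1) by (auto simp: is_path_def)
  have uw': "u \<noteq> w" using arc_adj_neq[OF uw comp_arcs_subset] .
  have P21: "set P2 \<inter> set P1 = {w}" using P12 by (simp add: Int_commute)
  consider "u \<in> set P1" | "u \<in> set P2" | "u \<notin> set P1" "u \<notin> set P2" by blast
  then show ?thesis
  proof cases
    case 1
    obtain P1' where P1': "is_path (arc_adj H comp_arcs) P1'" "hd P1' = u" "last P1' = last P1"
      "set P1' \<subseteq> set P1" "is_path (arc_adj H comp_arcs) (u # P2)" "set P1' \<inter> set (u # P2) = {u}"
      by (rule path_pair_reroute[OF P1(1) P2(1) P1(2) P2(2) P12 1 uw' uw])
    have "set P1' - {V1} \<subseteq> inner" using P1'(4) P1(4) by blast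
    moreover have "set (u # P2) - {V2} \<subseteq> inner" using P2(4) u by auto
    ultimately show ?thesis
      using P1' P1(3) P2(2,3) P2ne by (intro fanI[of H comp_arcs P1' "u # P2"]) simp_all
  next
    case 2
    obtain P2' where P2': "is_path (arc_adj H comp_arcs) P2'" "hd P2' = u" "last P2' = last P2"
      "set P2' \<subseteq> set P2" "is_path (arc_adj H comp_arcs) (u # P1)" "set P2' \<inter> set (u # P1) = {u}"
      by (rule path_pair_reroute[OF P2(1) P1(1) P2(2) P1(2) P21 2 uw' uw])
    have "set P2' - {V2} \<subseteq> inner" using P2'(4) P2(4) by blast
    moreover have "set (u # P1) - {V1} \<subseteq> inner" using P1(4) u by auto
    ultimately have "fan H comp_arcs inner V2 V1 u w"
      using P2' P2(3) P1(2,3) P1ne by (intro fanI[of H comp_arcs P2' "u # P1"]) simp_all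
    then show ?thesis by (rule fan_swap)
  next
    case 3
    then show ?thesis by (rule fan_step_outside[OF u w uw P1 P2 P12])
  qed
qed

lemma fan_exists: "u \<in> inner \<Longrightarrow> \<exists>w. fan H comp_arcs inner V1 V2 u w"
proof -
  obtain u0 where u0: "u0 \<in> inner" "arc_adj H comp_arcs u0 V1" using inner_adj_V1 by blast
  assume "u \<in> inner"
  then have "(madj inner Ed' (nabla_ends H))\<^sup>*\<^sup>* u u0"
    using inner_connected u0(1) unfolding mconnected_def by blast
  then show ?thesis
  proof (induction rule: converse_rtranclp_induct)
    case base
    then show ?case using fan_base[OF u0] by blast
  next
    case (step x y)
    obtain e where e: "e \<in> Ed'" "nabla_ends H e = {x, y}" "x \<in> inner" "y \<in> inner"
      using step(1) by (auto simp: madj_def)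
    then obtain F where "e = ArcE F" using arc_edges by blast
    then have "arc_adj H comp_arcs x y" using e unfolding arc_adj_def by auto
    then show ?case using fan_step[OF e(3,4)] step(3) by blast
  qed
qed

lemma arc_path_through_inner_arc:
  assumes E: "E \<in> comp_arcs" "ends H E = {p, q}" and p: "p \<in> inner" and q: "q \<in> inner"
  shows "arc_path_through H comp_arcs V1 V2 E"
proof -
  obtain w' where "fan H comp_arcs inner V1 V2 p w'" using fan_exists[OF p] by blast
  moreover have "arc_adj H comp_arcs q p" using E unfolding arc_adj_def by (auto simp: insert_commute)
  ultimately have "fan H comp_arcs inner V1 V2 q p" using fan_step[OF q p] by blast
  then obtain P1 P2 where P: "is_path (arc_adj H comp_arcs) P1" "is_path (arc_adj H comp_arcs) P2"
    "hd P1 = q" "hd P2 = q" "last P1 = V1" "last P2 = V2" "set P1 \<inter> set P2 = {q}"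
    and first: "tl P1 \<noteq> [] \<and> hd (tl P1) = p \<or> tl P2 \<noteq> [] \<and> hd (tl P2) = p"
    unfolding fan_def by (elim exE conjE) (rule that; assumption)
  have P1ne: "P1 \<noteq> []" and P2ne: "P2 \<noteq> []" using P(1,2) by (auto simp: is_path_def)
  obtain t where t: "P2 = q # t" using P2ne P(4) by (cases P2) auto
  have tne: "t \<noteq> []" using t P(6) q by auto
  have t_path: "is_path (arc_adj H comp_arcs) t" "arc_adj H comp_arcs q (hd t)" "q \<notin> set t"
    using P(2) t tne by (simp_all add: is_path_Cons_iff)
  define Ws where "Ws = rev P1 @ t"
  have "is_path (arc_adj H comp_arcs) (rev P1)" using is_path_rev[OF P(1)] arc_adj_sym by blast
  moreover have "set (rev P1) \<inter> set t = {}" using P(7) t t_path(3) by auto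
  moreover have "last (rev P1) = q" using P(3) P1ne by (simp add: last_rev)
  ultimately have "is_path (arc_adj H comp_arcs) Ws"
    unfolding Ws_def using t_path(1,2) by (intro is_path_append) simp_all
  moreover have "hd Ws = V1" "last Ws = V2" using P(5,6) P1ne t tne by (simp_all add: Ws_def hd_rev)
  moreover have "\<exists>j. Suc j < length Ws \<and> ends H E = {Ws ! j, Ws ! Suc j}"
  proof (cases "tl P1 \<noteq> [] \<and> hd (tl P1) = p")
    case True
    then obtain r where "P1 = q # p # r" using P(3) P1ne by (cases P1; cases "tl P1") auto
    then have "Ws ! length r = p" "Ws ! Suc (length r) = q" "Suc (length r) < length Ws"
      by (simp_all add: Ws_def nth_append)
    then show ?thesis using E(2) by (metis insert_commute)
  next
    case False
    then obtain r where r: "t = p # r" using first t tne by (cases t) auto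
    have "Ws ! (length P1 - 1) = q" using P1ne P(3) by (simp add: Ws_def nth_append rev_nth hd_conv_nth)
    moreover have "Ws ! Suc (length P1 - 1) = p" "Suc (length P1 - 1) < length Ws"
      using P1ne r by (simp_all add: Ws_def nth_append)
    ultimately have "ends H E = {Ws ! (length P1 - 1), Ws ! Suc (length P1 - 1)}"
      using E(2) by (simp add: insert_commute)
    then show ?thesis using \<open>Suc (length P1 - 1) < length Ws\<close> by blast
  qed
  ultimately show ?thesis unfolding arc_path_through_def by blast
qed

lemma arc_path_through_end_arc:
  assumes E: "E \<in> comp_arcs" "ends H E = {V1, q}" and q: "q \<in> inner"
  shows "arc_path_through H comp_arcs V1 V2 E"
proof -
  obtain w' where "fan H comp_arcs inner V1 V2 q w'" using fan_exists[OF q] by blast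
  then obtain P2 where P2: "is_path (arc_adj H comp_arcs) P2" "hd P2 = q" "last P2 = V2"
    "set P2 - {V2} \<subseteq> inner"
    unfolding fan_def by (elim exE conjE) (rule that; assumption)
  have P2ne: "P2 \<noteq> []" using P2(1) by (simp add: is_path_def)
  have "V1 \<notin> set P2" using P2(4) split_pair(1) by auto
  moreover have "arc_adj H comp_arcs V1 q" using E unfolding arc_adj_def by auto
  ultimately have "is_path (arc_adj H comp_arcs) (V1 # P2)"
    using P2(1,2) P2ne by (simp add: is_path_Cons_iff)
  moreover have "hd (V1 # P2) = V1" "last (V1 # P2) = V2" using P2(3) P2ne by simp_all
  moreover have "ends H E = {(V1 # P2) ! 0, (V1 # P2) ! Suc 0}" "Suc 0 < length (V1 # P2)"
    using E(2) P2(2) P2ne by (simp_all add: hd_conv_nth)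
  ultimately show ?thesis unfolding arc_path_through_def by blast
qed

lemma arc_path_through_comp_arc:
  assumes E: "E \<in> comp_arcs"
  shows "arc_path_through H comp_arcs V1 V2 E"
proof -
  have "E \<in> arcs H" using E comp_arcs_subset by blast
  then obtain p q where pq: "p \<noteq> q" "ends H E = {p, q}" by (rule arc_ends_pair)
  have N'pq: "p \<in> N'" "q \<in> N'" using comp_arc_ends[OF E] pq(2) by auto
  have not_pair: "{p, q} \<noteq> {V1, V2}" using comp_arc_not_split_pair[OF E] pq(2) by simp
  interpret swapped: split_comp Eg X H V2 V1 N' Ed' by (rule split_comp_swap)
  have inner_swap: "N' - {V2, V1} = inner" by (auto simp: insert_commute)
  consider "p \<in> inner" "q \<in> inner" | "p = V1" "q \<in> inner" | "p = V2" "q \<in> inner"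
    | "q = V1" "p \<in> inner" | "q = V2" "p \<in> inner"
    using N'pq not_pair pq(1) by blast
  then show ?thesis
  proof cases
    case 1
    then show ?thesis using arc_path_through_inner_arc[OF E pq(2)] by blast
  next
    case 2
    then show ?thesis using arc_path_through_end_arc[OF E] pq(2) by blast
  next
    case 3
    then have "arc_path_through H comp_arcs V2 V1 E"
      using swapped.arc_path_through_end_arc[OF E] pq(2) inner_swap by simp
    then show ?thesis by (rule arc_path_through_sym)
  next
    case 4
    then show ?thesis using arc_path_through_end_arc[OF E, of p] pq(2) by (simp add: insert_commute)
  next
    case 5
    then have "arc_path_through H comp_arcs V2 V1 E"
      using swapped.arc_path_through_end_arc[OF E, of p] pq(2) inner_swap by (simp add: insert_commute)
    then show ?thesis by (rule arc_path_through_sym)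
  qed
qed

end

section \<open>Merging a chunk\<close>

lemma merge_sym: "merge H V1 V2 C = merge H V2 V1 C"
proof -
  have "{V1, V2} = {V2, V1}" by (rule insert_commute)
  then show ?thesis unfolding merge_def by (simp only: disj_left_commute)
qed

lemma nodes_merge:
  "nodes (merge H V1 V2 C) = {V \<in> nodes H. V = V1 \<or> V = V2 \<or> (\<exists>E\<in>arcs H. E \<inter> C = {} \<and> V \<in> ends H E)}"
  and arcs_merge: "arcs (merge H V1 V2 C) = {E \<in> arcs H. E \<inter> C = {}} \<union> {C}"
  and ends_merge: "ends (merge H V1 V2 C) E = (if E = C then {V1, V2} else ends H E)"
  by (simp_all add: merge_def)

locale chunk = xnet +
  fixes V1 V2 C :: "'a set" and S :: "'a set set set"
  assumes sym: "\<And>x y. Eg x y \<Longrightarrow> Eg y x"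
    and S_nonempty: "S \<noteq> {}"
    and S_split: "\<And>A. A \<in> S \<Longrightarrow> split_component H A {V1, V2}"
    and C_eq: "C = \<Union>(\<Union>S)"
begin

abbreviation "M \<equiv> merge H V1 V2 C"
abbreviation "chunk_arcs \<equiv> \<Union>S"
abbreviation "inner_nodes \<equiv> {Z. \<exists>F\<in>chunk_arcs. Z \<in> ends H F} - {V1, V2}"

lemma chunk_swap: "chunk Eg X H V2 V1 C S"
  using net sym S_nonempty S_split C_eq by unfold_locales (auto simp: insert_commute)

lemma split_componentE:
  assumes "A \<in> S"
  obtains (arc) E where "E \<in> arcs H" "A = {E}" "ends H E = {V1, V2}"
    | (comp) N' Ed' where "split_comp Eg X H V1 V2 N' Ed'" "A = {E. ArcE E \<in> Ed'}"
proof -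
  have "split_component H A {V1, V2}" using S_split assms by blast
  then consider (one) E where "E \<in> arcs H" "A = {E}" "{V1, V2} = ends H E"
    | (two) U V N' Ed' where "{V1, V2} = {U, V}" "is_cutpair H U V" "nabla_subgraph H N' Ed'"
        "Ed' \<subseteq> ArcE ` arcs H" "sc_prop H U V N' Ed'"
        "\<forall>N'' Ed''. nabla_subgraph H N'' Ed'' \<and> sc_prop H U V N'' Ed'' \<and>
            N' \<subseteq> N'' \<and> Ed' \<subseteq> Ed'' \<longrightarrow> N'' = N' \<and> Ed'' = Ed'" "A = {E. ArcE E \<in> Ed'}"
    unfolding split_component_def by blast
  then show ?thesis
  proof cases
    case one
    then show ?thesis using arc by simp
  next
    case two
    interpret UV: split_comp Eg X H U V N' Ed'
      using two(2-6) by unfold_locales blast+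
    have "U \<noteq> V" using two(2) by (simp add: is_cutpair_def)
    then consider "U = V1" "V = V2" | "U = V2" "V = V1" using two(1) by (metis doubleton_eq_iff)
    then show ?thesis
    proof cases
      case 1
      then show ?thesis using comp UV.split_comp_axioms two(7) by blast
    next
      case 2
      then show ?thesis using comp UV.split_comp_swap two(7) by blast
    qed
  qed
qed

lemma split_pair: "V1 \<noteq> V2" "V1 \<in> nodes H" "V2 \<in> nodes H"
proof -
  obtain A where "A \<in> S" using S_nonempty by blast
  then have "V1 \<noteq> V2 \<and> V1 \<in> nodes H \<and> V2 \<in> nodes H"
  proof (cases rule: split_componentE)
    case (arc E)
    have "card {V1, V2} = 2" using card_arc_ends[OF arc(1)] arc(3) by simp
    then have "V1 \<noteq> V2" by (metis card_2_iff doubleton_eq_iff)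
    moreover have "{V1, V2} \<subseteq> nodes H" using arc_ends_subset[OF arc(1)] arc(3) by simp
    ultimately show ?thesis by simp
  next
    case (comp N' Ed')
    then show ?thesis using split_comp.split_pair[OF comp(1)] by blast
  qed
  then show "V1 \<noteq> V2" "V1 \<in> nodes H" "V2 \<in> nodes H" by auto
qed

lemma chunk_arcs_subset: "chunk_arcs \<subseteq> arcs H"
proof
  fix F assume "F \<in> chunk_arcs"
  then obtain A where A: "A \<in> S" "F \<in> A" by blast
  from A(1) show "F \<in> arcs H"
  proof (cases rule: split_componentE)
    case (comp N' Ed')
    then show ?thesis using split_comp.comp_arcs_subset A(2) by blast
  qed (use A(2) in simp)
qed

lemma V1_incident: "\<exists>F\<in>chunk_arcs. V1 \<in> ends H F"
proof -
  obtain A where A: "A \<in> S" using S_nonempty by blast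
  then show ?thesis
  proof (cases rule: split_componentE)
    case (arc E)
    then show ?thesis using A by auto
  next
    case (comp N' Ed')
    then obtain u where "arc_adj H A u V1" using split_comp.inner_adj_V1 by blast
    then show ?thesis using A unfolding arc_adj_def by auto
  qed
qed

lemma V2_incident: "\<exists>F\<in>chunk_arcs. V2 \<in> ends H F"
  using chunk.V1_incident[OF chunk_swap] .

lemma C_nonempty: "C \<noteq> {}"
  using V1_incident chunk_arcs_subset arc_nonempty C_eq by blast

lemma arc_disjoint_C_iff: "E \<in> arcs H \<Longrightarrow> E \<inter> C = {} \<longleftrightarrow> E \<notin> chunk_arcs"
  using arc_nonempty arcs_disjoint chunk_arcs_subset unfolding C_eq by blast

lemma edge_at_inner_node:
  assumes Z: "Z \<in> inner_nodes" and e: "e \<in> nabla_edges H" "Z \<in> nabla_ends H e"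
  shows "\<exists>F\<in>chunk_arcs. e = ArcE F"
proof -
  obtain A F0 where A: "A \<in> S" "F0 \<in> A" "Z \<in> ends H F0" and ZV: "Z \<noteq> V1" "Z \<noteq> V2"
    using Z by blast
  from A(1) show ?thesis
  proof (cases rule: split_componentE)
    case (arc E)
    then show ?thesis using A ZV by auto
  next
    case (comp N' Ed')
    interpret split_comp Eg X H V1 V2 N' Ed' by (rule comp(1))
    have "Z \<in> inner" using comp_arc_ends[of F0] A comp(2) ZV by auto
    then obtain F where "F \<in> comp_arcs" "e = ArcE F" using inner_edge_is_comp_arc[OF _ e] by blast
    then show ?thesis using comp(2) A(1) by blast
  qed
qed

lemma inner_node_not_merge_node: "Z \<in> inner_nodes \<Longrightarrow> Z \<notin> nodes M"
proof
  assume Z: "Z \<in> inner_nodes" and ZM: "Z \<in> nodes M"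
  then obtain E where E: "E \<in> arcs H" "E \<inter> C = {}" "Z \<in> ends H E" by (auto simp: nodes_merge)
  then have "ArcE E \<in> nabla_edges H" "Z \<in> nabla_ends H (ArcE E)" by (simp_all add: nabla_edges_def)
  then obtain F where "F \<in> chunk_arcs" "ArcE E = ArcE F" using edge_at_inner_node[OF Z] by blast
  then show False using E(1,2) arc_disjoint_C_iff by simp
qed

lemma leaf_not_inner_node: "L \<in> leaf_nodes H \<Longrightarrow> L \<notin> inner_nodes"
proof
  assume L: "L \<in> leaf_nodes H" and LI: "L \<in> inner_nodes"
  have "leaf_nodes H \<noteq> {L}" using card_leaf_nodes by auto
  then obtain L' where L': "L' \<in> leaf_nodes H" "L' \<noteq> L" using L by blast
  then have "LeafE {L, L'} \<in> nabla_edges H" using L unfolding nabla_edges_def by blast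
  moreover have "L \<in> nabla_ends H (LeafE {L, L'})" by simp
  ultimately obtain F where "LeafE {L, L'} = ArcE F" using edge_at_inner_node[OF LI] by blast
  then show False by simp
qed

lemma merge_nodes_subset: "nodes M \<subseteq> nodes H"
  by (auto simp: nodes_merge)

lemma split_pair_merge_nodes: "V1 \<in> nodes M" "V2 \<in> nodes M"
  using split_pair by (auto simp: nodes_merge)

lemma leaf_merge_node: "L \<in> leaf_nodes H \<Longrightarrow> L \<in> nodes M"
proof -
  assume L: "L \<in> leaf_nodes H"
  then have LH: "L \<in> nodes H" and "mdegree H L = 1" by (auto simp: leaf_nodes_def)
  then obtain F where F: "F \<in> arcs H" "L \<in> ends H F"
    unfolding mdegree_def by (metis (no_types, lifting) card.empty empty_Collect_eq zero_neq_one)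
  show "L \<in> nodes M"
  proof (cases "F \<inter> C = {}")
    case True
    then show ?thesis using F LH by (auto simp: nodes_merge)
  next
    case False
    then have "F \<in> chunk_arcs" using arc_disjoint_C_iff F(1) by blast
    then have "L \<in> {V1, V2} \<or> L \<in> inner_nodes" using F(2) by blast
    then show ?thesis using leaf_not_inner_node[OF L] split_pair_merge_nodes by auto
  qed
qed

lemma arc_at_outer_node_disjoint_C:
  assumes "W \<in> nodes M" "W \<notin> {V1, V2}" "E \<in> arcs H" "W \<in> ends H E"
  shows "E \<inter> C = {}"
  using assms inner_node_not_merge_node arc_disjoint_C_iff by blast

lemma mdegree_merge_outer:
  assumes W: "W \<in> nodes M" "W \<notin> {V1, V2}"
  shows "mdegree M W = mdegree H W"
proof -
  have "{E \<in> arcs M. W \<in> ends M E} = {E \<in> arcs H. W \<in> ends H E}"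
    using W arc_at_outer_node_disjoint_C[OF W] C_nonempty
    by (auto simp: arcs_merge ends_merge split: if_splits)
  then show ?thesis by (simp add: mdegree_def)
qed

lemma mdegree_merge_V1:
  "mdegree M V1 = Suc (card {E \<in> arcs H. E \<inter> C = {} \<and> V1 \<in> ends H E})"
proof -
  have "{E \<in> arcs M. V1 \<in> ends M E} = insert C {E \<in> arcs H. E \<inter> C = {} \<and> V1 \<in> ends H E}"
    using C_nonempty by (auto simp: arcs_merge ends_merge)
  moreover have "C \<notin> {E \<in> arcs H. E \<inter> C = {} \<and> V1 \<in> ends H E}" using C_nonempty by auto
  ultimately show ?thesis using finite_arcs by (simp add: mdegree_def)
qed

text \<open>Otherwise every edge of \<open>\<nabla>(H)\<close> leaving \<open>V1\<close> or an inner node of the chunk ends in \<open>V2\<close>, an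
  inner node or \<open>V1\<close>, so \<open>V2\<close> would separate \<open>V1\<close> from a leaf outside the split pair.\<close>
lemma outer_arc_at_V1:
  assumes "V1 \<notin> leaf_nodes H"
  shows "\<exists>E\<in>arcs H. E \<inter> C = {} \<and> V1 \<in> ends H E"
proof (rule ccontr)
  assume no_outer: "\<not> ?thesis"
  have "\<not> leaf_nodes H \<subseteq> {V1, V2}"
  proof
    assume "leaf_nodes H \<subseteq> {V1, V2}"
    then have "card (leaf_nodes H) \<le> card {V1, V2}" by (rule card_mono[rotated]) simp
    also have "\<dots> \<le> 2" by (simp add: card_insert_if)
    finally show False using card_leaf_nodes by simp
  qed
  then obtain L where L: "L \<in> leaf_nodes H" "L \<notin> {V1, V2}" by blast
  have conn: "mconnected (nodes H - {V2}) (nabla_edges H) (nabla_ends H)"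
    using nabla_connected_minus split_pair by blast
  have "V1 \<in> nodes H - {V2}" "L \<in> nodes H - {V2}" "L \<notin> insert V1 inner_nodes"
    using split_pair L leaf_not_inner_node[OF L(1)] by (auto simp: leaf_nodes_def)
  then obtain e x y where e: "e \<in> nabla_edges H" "x \<in> insert V1 inner_nodes"
    "y \<in> nodes H - {V2}" "y \<notin> insert V1 inner_nodes" "nabla_ends H e = {x, y}"
    by (rule mconnected_crossing_edge[OF conn _ insertI1])
  have outside: "y \<notin> ends H F" if "F \<in> chunk_arcs" for F
    using that e(3,4) by blast
  show False
  proof (cases "x \<in> inner_nodes")
    case True
    then obtain F where "F \<in> chunk_arcs" "e = ArcE F" using edge_at_inner_node e(1,5) by blast
    then show False using outside e(5) by auto
  next
    case False
    then have x: "x = V1" using e(2) by blast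
    from e(1) consider (arc) F where "e = ArcE F" "F \<in> arcs H"
      | (leaf) L1 L2 where "e = LeafE {L1, L2}" "L1 \<in> leaf_nodes H" "L2 \<in> leaf_nodes H"
      unfolding nabla_edges_def by blast
    then show False
    proof cases
      case arc
      then have F: "ends H F = {V1, y}" using e(5) x by simp
      then have "F \<notin> chunk_arcs" using outside by blast
      then have "F \<inter> C = {}" using arc_disjoint_C_iff[OF arc(2)] by simp
      moreover have "V1 \<in> ends H F" using F by simp
      ultimately show False using no_outer arc(2) by blast
    next
      case leaf
      then show False using e(5) x assms by auto
    qed
  qed
qed

lemma leaf_merge_V1_iff: "V1 \<in> leaf_nodes M \<longleftrightarrow> V1 \<in> leaf_nodes H"
proof -
  define SV where "SV = {E \<in> arcs H. E \<inter> C = {} \<and> V1 \<in> ends H E}"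
  have "finite SV" using finite_arcs by (simp add: SV_def)
  then have "V1 \<in> leaf_nodes M \<longleftrightarrow> SV = {}"
    using mdegree_merge_V1 split_pair_merge_nodes by (simp add: leaf_nodes_def SV_def)
  also have "\<dots> \<longleftrightarrow> V1 \<in> leaf_nodes H"
  proof
    assume "SV = {}"
    then show "V1 \<in> leaf_nodes H" using outer_arc_at_V1 by (auto simp: SV_def)
  next
    assume leaf: "V1 \<in> leaf_nodes H"
    obtain F where F: "F \<in> chunk_arcs" "V1 \<in> ends H F" using V1_incident by blast
    show "SV = {}"
    proof (rule ccontr)
      assume "SV \<noteq> {}"
      then obtain E where E: "E \<in> arcs H" "E \<inter> C = {}" "V1 \<in> ends H E" by (auto simp: SV_def)
      have "E \<noteq> F" using E F arc_disjoint_C_iff by blast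
      moreover have "{E, F} \<subseteq> {E \<in> arcs H. V1 \<in> ends H E}" using E F chunk_arcs_subset by blast
      ultimately have "2 \<le> mdegree H V1"
        unfolding mdegree_def using finite_arcs by (metis (no_types, lifting) card_2_iff card_mono finite_subset mem_Collect_eq subsetI)
      then show False using leaf by (simp add: leaf_nodes_def)
    qed
  qed
  finally show ?thesis .
qed

lemma leaf_nodes_merge: "leaf_nodes M = leaf_nodes H"
proof (intro equalityI subsetI)
  have "V2 \<in> leaf_nodes M \<longleftrightarrow> V2 \<in> leaf_nodes H"
    using chunk.leaf_merge_V1_iff[OF chunk_swap] by (simp add: merge_sym[of H V2 V1 C])
  then have V12: "L \<in> leaf_nodes M \<longleftrightarrow> L \<in> leaf_nodes H" if "L \<in> {V1, V2}" for L
    using that leaf_merge_V1_iff by blast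
  fix L
  show "L \<in> leaf_nodes H" if L: "L \<in> leaf_nodes M"
  proof (cases "L \<in> {V1, V2}")
    case False
    have "L \<in> nodes M" using L by (simp add: leaf_nodes_def)
    then show ?thesis
      using L mdegree_merge_outer[OF _ False] merge_nodes_subset by (auto simp: leaf_nodes_def)
  qed (use V12 L in blast)
  show "L \<in> leaf_nodes M" if L: "L \<in> leaf_nodes H"
  proof (cases "L \<in> {V1, V2}")
    case False
    then show ?thesis
      using L leaf_merge_node[OF L] mdegree_merge_outer[OF _ False] by (auto simp: leaf_nodes_def)
  qed (use V12 L in blast)
qed

abbreviation "collapse T \<equiv> \<lambda>W. if W \<in> nodes M then W else T"

lemma collapse_merge_node: "T \<in> {V1, V2} \<Longrightarrow> collapse T W \<in> nodes M"
  using split_pair_merge_nodes by auto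

text \<open>The nodes deleted by the merge are inner nodes of the chunk; sending them to a node of the
  split pair maps every arc of \<open>H\<close> to an arc of the merge or to a single node.\<close>
lemma collapse_arc:
  assumes T: "T \<in> {V1, V2}" and F: "F \<in> arcs H" "ends H F = {x, y}"
  shows "collapse T x = collapse T y \<or> (\<exists>E\<in>arcs M. ends M E = {collapse T x, collapse T y})"
proof (cases "F \<in> chunk_arcs")
  case False
  then have FC: "F \<inter> C = {}" using arc_disjoint_C_iff F(1) by blast
  have "x \<in> nodes H" "y \<in> nodes H" using arc_ends_subset[OF F(1)] F(2) by simp_all
  then have xy: "x \<in> nodes M" "y \<in> nodes M" using F FC unfolding nodes_merge by blast+
  have "F \<noteq> C" using FC C_nonempty by blast
  then have "F \<in> arcs M" "ends M F = {x, y}" using F FC by (simp_all add: arcs_merge ends_merge)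
  then have "\<exists>E\<in>arcs M. ends M E = {x, y}" by blast
  then show ?thesis using xy by simp
next
  case True
  have pair: "collapse T z \<in> {V1, V2}" if "z \<in> ends H F" for z
  proof (cases "z \<in> nodes M")
    case True
    then have "z \<notin> inner_nodes" using inner_node_not_merge_node by blast
    then show ?thesis using \<open>F \<in> chunk_arcs\<close> that True by auto
  qed (use T in simp)
  have "C \<in> arcs M" "ends M C = {V1, V2}" by (simp_all add: arcs_merge ends_merge)
  moreover have "collapse T x \<in> {V1, V2}" "collapse T y \<in> {V1, V2}" using pair F(2) by simp_all
  ultimately show ?thesis by (auto simp: insert_commute)
qed

lemma madj_collapse_arcs:
  assumes T: "T \<in> {V1, V2}" and xy: "madj (nodes H) (arcs H) (ends H) x y"
  shows "collapse T x = collapse T y \<or> madj (nodes M) (arcs M) (ends M) (collapse T x) (collapse T y)"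
proof -
  obtain F where "F \<in> arcs H" "ends H F = {x, y}" using xy by (auto simp: madj_def)
  note arc = collapse_arc[OF T this]
  show ?thesis
  proof (cases "collapse T x = collapse T y")
    case False
    then obtain E where "E \<in> arcs M" "ends M E = {collapse T x, collapse T y}" using arc by blast
    then show ?thesis unfolding madj_def using collapse_merge_node[OF T] False by blast
  qed simp
qed

lemma madj_collapse_nabla:
  assumes T: "T \<in> {V1, V2}" "T \<notin> D" and xy: "madj (nodes H - D) (nabla_edges H) (nabla_ends H) x y"
  shows "collapse T x = collapse T y \<or>
    madj (nodes M - D) (nabla_edges M) (nabla_ends M) (collapse T x) (collapse T y)"
proof -
  obtain e where e: "e \<in> nabla_edges H" "nabla_ends H e = {x, y}"
    and x: "x \<in> nodes H - D" and y: "y \<in> nodes H - D" and "x \<noteq> y"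
    using xy by (auto simp: madj_def)
  have xyM: "collapse T x \<in> nodes M - D" "collapse T y \<in> nodes M - D"
    using collapse_merge_node[OF T(1)] x y T(2) by auto
  from e(1) consider (arc) F where "e = ArcE F" "F \<in> arcs H"
    | (leaf) L1 L2 where "e = LeafE {L1, L2}" "L1 \<in> leaf_nodes H" "L2 \<in> leaf_nodes H"
    unfolding nabla_edges_def by blast
  then show ?thesis
  proof cases
    case arc
    show ?thesis
    proof (cases "collapse T x = collapse T y")
      case False
      have "ends H F = {x, y}" using e(2) arc(1) by simp
      from collapse_arc[OF T(1) arc(2) this] False
      obtain E where "E \<in> arcs M" "ends M E = {collapse T x, collapse T y}" by blast
      then have "ArcE E \<in> nabla_edges M" "nabla_ends M (ArcE E) = {collapse T x, collapse T y}"
        by (simp_all add: nabla_edges_def)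
      then show ?thesis unfolding madj_def using xyM False by blast
    qed simp
  next
    case leaf
    have "{x, y} = {L1, L2}" using leaf(1) e(2) by simp
    then have "{x, y} \<subseteq> leaf_nodes M" using leaf(2,3) leaf_nodes_merge by simp
    then have lxy: "x \<in> leaf_nodes M" "y \<in> leaf_nodes M" by simp_all
    then have cxy: "collapse T x = x" "collapse T y = y" by (simp_all add: leaf_nodes_def)
    have "LeafE {x, y} \<in> nabla_edges M"
      using lxy \<open>x \<noteq> y\<close> unfolding nabla_edges_def by blast
    moreover have "nabla_ends M (LeafE {x, y}) = {x, y}" by simp
    moreover have "x \<in> nodes M - D" "y \<in> nodes M - D" using xyM cxy by simp_all
    ultimately have "madj (nodes M - D) (nabla_edges M) (nabla_ends M) x y"
      unfolding madj_def using \<open>x \<noteq> y\<close> by blast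
    then show ?thesis using cxy by simp
  qed
qed

lemma merge_arcs_connected: "mconnected (nodes M) (arcs M) (ends M)"
  unfolding mconnected_def
proof (intro ballI)
  fix a b assume ab: "a \<in> nodes M" "b \<in> nodes M"
  then have "(madj (nodes H) (arcs H) (ends H))\<^sup>*\<^sup>* a b"
    using arcs_connected merge_nodes_subset unfolding mconnected_def by blast
  then have "(madj (nodes M) (arcs M) (ends M))\<^sup>*\<^sup>* (collapse V1 a) (collapse V1 b)"
    by (rule rtranclp_madj_map) (rule madj_collapse_arcs, simp)
  then show "(madj (nodes M) (arcs M) (ends M))\<^sup>*\<^sup>* a b" using ab by simp
qed

lemma merge_nabla_connected_minus:
  assumes "mconnected (nodes H - D) (nabla_edges H) (nabla_ends H)" "\<not> {V1, V2} \<subseteq> D"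
  shows "mconnected (nodes M - D) (nabla_edges M) (nabla_ends M)"
  unfolding mconnected_def
proof (intro ballI)
  fix a b assume ab: "a \<in> nodes M - D" "b \<in> nodes M - D"
  define T where "T = (if V1 \<in> D then V2 else V1)"
  have T: "T \<in> {V1, V2}" "T \<notin> D" using assms(2) by (auto simp: T_def)
  have "(madj (nodes H - D) (nabla_edges H) (nabla_ends H))\<^sup>*\<^sup>* a b"
    using assms(1) ab merge_nodes_subset unfolding mconnected_def by blast
  then have "(madj (nodes M - D) (nabla_edges M) (nabla_ends M))\<^sup>*\<^sup>* (collapse T a) (collapse T b)"
    by (rule rtranclp_madj_map) (rule madj_collapse_nabla[OF T])
  then show "(madj (nodes M - D) (nabla_edges M) (nabla_ends M))\<^sup>*\<^sup>* a b" using ab by simp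
qed

lemma merge_nabla_biconnected: "mbiconnected (nodes M) (nabla_edges M) (nabla_ends M)"
proof -
  have "mconnected (nodes M - {}) (nabla_edges M) (nabla_ends M)"
    using nabla_biconnected split_pair(1)
    by (intro merge_nabla_connected_minus) (simp_all add: mbiconnected_def)
  moreover have "mconnected (nodes M - {v}) (nabla_edges M) (nabla_ends M)" if "v \<in> nodes M" for v
    using nabla_connected_minus that merge_nodes_subset split_pair(1)
    by (intro merge_nabla_connected_minus) auto
  ultimately show ?thesis unfolding mbiconnected_def by simp
qed

lemma arc_path_through_chunk:
  assumes E: "E \<in> chunk_arcs"
  shows "arc_path_through H chunk_arcs V1 V2 E"
proof -
  obtain A where A: "A \<in> S" "E \<in> A" using E by blast
  from A(1) show ?thesis
  proof (cases rule: split_componentE)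
    case (arc E')
    then have "arc_adj H chunk_arcs V1 V2" "ends H E = {[V1, V2] ! 0, [V1, V2] ! Suc 0}"
      using A unfolding arc_adj_def by auto
    then have "is_path (arc_adj H chunk_arcs) [V1, V2]" "ends H E = {[V1, V2] ! 0, [V1, V2] ! Suc 0}"
      using split_pair(1) by (simp_all add: is_path_Cons_iff)
    then show ?thesis unfolding arc_path_through_def by force
  next
    case (comp N' Ed')
    then have "arc_path_through H A V1 V2 E"
      using split_comp.arc_path_through_comp_arc A(2) by blast
    then show ?thesis using arc_path_through_mono A(1) by blast
  qed
qed

lemma merge_arc_rung:
  assumes UV: "ends M C = {U, V}" and x: "x \<in> C"
  shows "\<exists>P. uv_rung Eg C U V P \<and> x \<in> set P"
proof -
  obtain E where E: "E \<in> chunk_arcs" "x \<in> E" using x C_eq by blast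
  obtain P where P: "uv_rung Eg C V1 V2 P" "x \<in> set P"
    using uv_rung_through_arc[OF sym chunk_arcs_subset arc_path_through_chunk[OF E(1)] E] C_eq by blast
  have "{V1, V2} = {U, V}" using UV by (simp add: ends_merge)
  then consider "U = V1" "V = V2" | "U = V2" "V = V1" by (metis doubleton_eq_iff)
  then show ?thesis
  proof cases
    case 2
    then show ?thesis using uv_rung_rev[OF P(1) sym] P(2) by auto
  qed (use P in blast)
qed

lemma chunk_arc_end_iff:
  assumes E: "E \<in> chunk_arcs" and V: "V \<in> nodes M" "E \<inter> V \<noteq> {}"
  shows "V \<in> ends H E \<longleftrightarrow> V \<in> {V1, V2}"
proof
  assume "V \<in> ends H E"
  then show "V \<in> {V1, V2}" using E inner_node_not_merge_node[of V] V(1) by blast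
next
  have "V \<in> nodes H" using V(1) merge_nodes_subset by blast
  then show "V \<in> ends H E" using arc_meets_node_iff[of E V] E chunk_arcs_subset V(2) by blast
qed

lemma merge_arc_meets_node_iff:
  assumes E: "E \<in> arcs M" and V: "V \<in> nodes M"
  shows "E \<inter> V \<noteq> {} \<longleftrightarrow> V \<in> ends M E"
proof (cases "E = C")
  case True
  have "C \<inter> V \<noteq> {} \<longleftrightarrow> V \<in> {V1, V2}"
  proof
    assume "C \<inter> V \<noteq> {}"
    then obtain F where "F \<in> chunk_arcs" "F \<inter> V \<noteq> {}" using C_eq by blast
    then show "V \<in> {V1, V2}" using chunk_arc_end_iff V arc_meets_node_iff chunk_arcs_subset
      merge_nodes_subset by blast
  next
    assume "V \<in> {V1, V2}"
    then obtain F where "F \<in> chunk_arcs" "V \<in> ends H F" using V1_incident V2_incident by blast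
    then have "F \<inter> V \<noteq> {}"
      using arc_meets_node_iff[of F V] chunk_arcs_subset V merge_nodes_subset by blast
    then show "C \<inter> V \<noteq> {}" using \<open>F \<in> chunk_arcs\<close> C_eq by blast
  qed
  then show ?thesis using True by (simp add: ends_merge)
next
  case False
  then have "E \<in> arcs H" using E by (simp add: arcs_merge)
  then show ?thesis using arc_meets_node_iff V merge_nodes_subset False by (auto simp: ends_merge)
qed

lemma adj_C_iff:
  assumes F: "F \<in> arcs H" "F \<inter> C = {}" and u: "u \<in> C" and v: "v \<in> F"
  shows "Eg u v \<longleftrightarrow> (\<exists>V\<in>{V1, V2} \<inter> ends H F. u \<in> V \<and> v \<in> V)"
proof -
  obtain E where E: "E \<in> chunk_arcs" "u \<in> E" using u C_eq by blast
  have "E \<noteq> F" "E \<in> arcs H" using E F arc_disjoint_C_iff chunk_arcs_subset by blast+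
  then have "Eg u v \<longleftrightarrow> (\<exists>V\<in>ends H E \<inter> ends H F. u \<in> V \<and> v \<in> V)"
    using adj_across_arcs_iff E(2) F(1) v by blast
  also have "\<dots> \<longleftrightarrow> (\<exists>V\<in>{V1, V2} \<inter> ends H F. u \<in> V \<and> v \<in> V)"
  proof -
    have "V \<in> ends H E \<longleftrightarrow> V \<in> {V1, V2}" if "V \<in> ends H F" "u \<in> V" for V
    proof -
      have "V \<in> nodes M" using that(1) F arc_ends_subset unfolding nodes_merge by blast
      then show ?thesis using chunk_arc_end_iff[OF E(1)] E(2) that(2) by blast
    qed
    then show ?thesis by blast
  qed
  finally show ?thesis .
qed

lemma merge_adj_across_arcs_iff:
  assumes E: "E \<in> arcs M" and F: "F \<in> arcs M" and EF: "E \<noteq> F" and u: "u \<in> E" and v: "v \<in> F"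
  shows "Eg u v \<longleftrightarrow> (\<exists>V\<in>ends M E \<inter> ends M F. u \<in> V \<and> v \<in> V)"
proof -
  have H_arc: "G \<in> arcs H" "G \<inter> C = {}" if "G \<in> arcs M" "G \<noteq> C" for G
    using that by (auto simp: arcs_merge)
  consider "E = C" | "F = C" | "E \<noteq> C" "F \<noteq> C" by blast
  then show ?thesis
  proof cases
    case 1
    then have "F \<noteq> C" using EF by blast
    then show ?thesis using adj_C_iff[OF H_arc[OF F] u[unfolded 1] v] 1 by (simp add: ends_merge)
  next
    case 2
    then have "E \<noteq> C" using EF by blast
    then have "Eg v u \<longleftrightarrow> (\<exists>V\<in>{V1, V2} \<inter> ends H E. v \<in> V \<and> u \<in> V)"
      using adj_C_iff[OF H_arc[OF E] v[unfolded 2] u] by blast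
    then show ?thesis using 2 \<open>E \<noteq> C\<close> sym by (auto simp: ends_merge)
  next
    case 3
    then show ?thesis using adj_across_arcs_iff[OF H_arc(1)[OF E] H_arc(1)[OF F] EF u v] 
      by (simp add: ends_merge)
  qed
qed

lemma C_subset: "C \<subseteq> X"
  using arcs_subset chunk_arcs_subset C_eq by blast

lemma Union_merge_arcs: "\<Union>(arcs M) = X"
proof (intro equalityI subsetI)
  fix x assume "x \<in> \<Union>(arcs M)"
  then show "x \<in> X" using C_subset arcs_subset by (auto simp: arcs_merge)
next
  fix x assume "x \<in> X"
  then obtain E where E: "E \<in> arcs H" "x \<in> E" using Union_arcs by blast
  show "x \<in> \<Union>(arcs M)"
  proof (cases "E \<inter> C = {}")
    case False
    then have "x \<in> C" using E arc_disjoint_C_iff C_eq by blast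
    then show ?thesis by (auto simp: arcs_merge)
  qed (use E in \<open>auto simp: arcs_merge\<close>)
qed

lemma is_net_merge: "is_net Eg X M"
proof -
  have "finite (nodes M)" using finite_nodes merge_nodes_subset finite_subset by blast
  moreover have "finite (arcs M)" using finite_arcs by (simp add: arcs_merge)
  moreover have "\<forall>V\<in>nodes M. V \<subseteq> X" using nodes_subset merge_nodes_subset by blast
  moreover have "\<forall>E\<in>arcs M. E \<subseteq> X" using arcs_subset C_subset by (auto simp: arcs_merge)
  moreover have "\<forall>E\<in>arcs M. ends M E \<subseteq> nodes M \<and> card (ends M E) = 2"
    using split_pair split_pair_merge_nodes arc_ends_subset card_arc_ends
    by (auto simp: arcs_merge ends_merge nodes_merge)
  moreover have "\<forall>E\<in>arcs M. E \<noteq> {}" using arc_nonempty C_nonempty by (auto simp: arcs_merge)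
  moreover have "\<forall>E\<in>arcs M. \<forall>F\<in>arcs M. E \<noteq> F \<longrightarrow> E \<inter> F = {}"
    using arcs_disjoint by (auto simp: arcs_merge)
  moreover have "card (leaf_nodes M) = 3" "\<forall>L\<in>leaf_nodes M. \<exists>v. L = {v} \<and> g_leaf Eg v"
    using card_leaf_nodes leaf_node_singleton by (simp_all add: leaf_nodes_merge)
  moreover have "\<forall>E\<in>arcs M. \<forall>U V. ends M E = {U, V} \<longrightarrow> (\<forall>x\<in>E. \<exists>P. uv_rung Eg E U V P \<and> x \<in> set P)"
    using merge_arc_rung arc_rung by (auto simp: arcs_merge ends_merge)
  moreover have "\<forall>E\<in>arcs M. \<forall>V\<in>nodes M. E \<inter> V \<noteq> {} \<longleftrightarrow> V \<in> ends M E"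
    by (intro ballI) (rule merge_arc_meets_node_iff)
  moreover have "\<forall>E\<in>arcs M. \<forall>F\<in>arcs M. \<forall>u v. E \<noteq> F \<and> u \<in> E \<and> v \<in> F \<longrightarrow>
      (Eg u v \<longleftrightarrow> (\<exists>V \<in> ends M E \<inter> ends M F. u \<in> V \<and> v \<in> V))"
    by (intro ballI allI impI, elim conjE, rule merge_adj_across_arcs_iff; assumption)
  ultimately show ?thesis
    unfolding is_net_def
    using merge_arcs_connected merge_nabla_biconnected Union_merge_arcs by (intro conjI) simp_all
qed

end

theorem lemma3p4:
  fixes Vg :: "'a set" and Eg :: "'a \<Rightarrow> 'a \<Rightarrow> bool"
    and X :: "'a set" and H :: "'a mgraph" and V1 V2 C :: "'a set"
  assumes "simple_graph Vg Eg"
    and "X \<subseteq> Vg"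
    and "is_net Eg X H"
    and "is_chunk H V1 V2 C"
  shows "is_net Eg X (merge H V1 V2 C)"
proof -
  obtain S where "S \<noteq> {}" "\<forall>A\<in>S. split_component H A {V1, V2}" "C = \<Union>(\<Union>S)"
    using assms(4) unfolding is_chunk_def by blast
  moreover have "\<And>x y. Eg x y \<Longrightarrow> Eg y x" using assms(1) by (simp add: simple_graph_def)
  ultimately interpret chunk Eg X H V1 V2 C S using assms(3) by unfold_locales blast+
  show ?thesis by (rule is_net_merge)
qed

end
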